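(* Let $S$ be a (left and right) Ore set in a ring $R$. Then there exists a pair $(Q,f)$, with $Q$ a ring and $f:R\to Q$ a ring homomorphism, such that (i) $f(s)$ is a unit of $Q$ for all $s\in S$, and for every pair $(Q',f')$ satisfying (i) there is a unique ring homomorphism $h:Q\to Q'$ with $f'=hf$. The ring $Q$ is unique up to isomorphism and is isomorphic to the localization of $R/\mathfrak p(S)$ at $\pi(S)$, where $\pi:R\to R/\mathfrak p(S)$ is the canonical map and $\pi(S)$ is a left and right denominator set of $R/\mathfrak p(S)$ consisting of regular elements.
   Context: Rings are associative with $1$. A multiplicatively closed subset $S$ ($1\in S$, $0\notin S$) is an Ore set if $Sr\cap Rs\ne\emptyset$ and $rS\cap sR\ne\emptyset$ for all $r\in R,s\in S$; a (left and right) denominator set is an Ore set such that $rs=0$ ($s\in S$) implies $tr=0$ for some $t\in S$ and $sr=0$ implies $rt=0$ for some $t\in S$. For a ring $B$ and $T\subseteq B$, $\mathrm{ass}_l(T,B):=\{b\mid tb=0\text{ for some }t\in T\}$, $\mathrm{ass}_r(T,B):=\{b\mid bt=0\text{ for some }t\in T\}$. Define ideals $\mathfrak p_\alpha$ ($\alpha\ge1$ ordinals): $\mathfrak p_1:=\mathrm{ass}_l(S,R)+\mathrm{ass}_r(S,R)$; $\mathfrak p_{\alpha+1}:=\pi_\alpha^{-1}(\mathrm{ass}_l(\pi_\alpha(S),R/\mathfrak p_\alpha)+\mathrm{ass}_r(\pi_\alpha(S),R/\mathfrak p_\alpha))$ with $\pi_\alpha:R\to R/\mathfrak p_\alpha$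 canonical; $\mathfrak p_\alpha:=\bigcup_{\beta<\alpha}\mathfrak p_\beta$ for limit $\alpha$; $\mathfrak p(S):=\bigcup_\alpha\mathfrak p_\alpha$. *)

theory Defs
  imports "HOL-Algebra.Algebra"
begin

definition ore_set :: "('a, 'm) ring_scheme \<Rightarrow> 'a set \<Rightarrow> bool" where
  "ore_set R S \<longleftrightarrow> S \<subseteq> carrier R \<and> \<one>\<^bsub>R\<^esub> \<in> S \<and> \<zero>\<^bsub>R\<^esub> \<notin> S \<and>
     (\<forall>s\<in>S. \<forall>t\<in>S. s \<otimes>\<^bsub>R\<^esub> t \<in> S) \<and>
     (\<forall>r\<in>carrier R. \<forall>s\<in>S.
        (\<exists>s'\<in>S. \<exists>r'\<in>carrier R. s' \<otimes>\<^bsub>R\<^esub> r = r' \<otimes>\<^bsub>R\<^esub> s) \<and>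
        (\<exists>s'\<in>S. \<exists>r'\<in>carrier R. r \<otimes>\<^bsub>R\<^esub> s' = s \<otimes>\<^bsub>R\<^esub> r'))"

definition denominator_set :: "('a, 'm) ring_scheme \<Rightarrow> 'a set \<Rightarrow> bool" where
  "denominator_set R S \<longleftrightarrow> ore_set R S \<and>
     (\<forall>r\<in>carrier R. \<forall>s\<in>S. r \<otimes>\<^bsub>R\<^esub> s = \<zero>\<^bsub>R\<^esub> \<longrightarrow> (\<exists>t\<in>S. t \<otimes>\<^bsub>R\<^esub> r = \<zero>\<^bsub>R\<^esub>)) \<and>
     (\<forall>r\<in>carrier R. \<forall>s\<in>S. s \<otimes>\<^bsub>R\<^esub> r = \<zero>\<^bsub>R\<^esub> \<longrightarrow> (\<exists>t\<in>S. r \<otimes>\<^bsub>R\<^esub> t = \<zero>\<^bsub>R\<^esub>))"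

definition regular_elem :: "('a, 'm) ring_scheme \<Rightarrow> 'a \<Rightarrow> bool" where
  "regular_elem R a \<longleftrightarrow> a \<in> carrier R \<and>
     (\<forall>x\<in>carrier R. a \<otimes>\<^bsub>R\<^esub> x = \<zero>\<^bsub>R\<^esub> \<longrightarrow> x = \<zero>\<^bsub>R\<^esub>) \<and>
     (\<forall>x\<in>carrier R. x \<otimes>\<^bsub>R\<^esub> a = \<zero>\<^bsub>R\<^esub> \<longrightarrow> x = \<zero>\<^bsub>R\<^esub>)"

definition ass_l :: "'b set \<Rightarrow> ('b, 'n) ring_scheme \<Rightarrow> 'b set" where
  "ass_l T B = {b \<in> carrier B. \<exists>t\<in>T. t \<otimes>\<^bsub>B\<^esub> b = \<zero>\<^bsub>B\<^esub>}"

definition ass_r :: "'b set \<Rightarrow> ('b, 'n) ring_scheme \<Rightarrow> 'b set" where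
  "ass_r T B = {b \<in> carrier B. \<exists>t\<in>T. b \<otimes>\<^bsub>B\<^esub> t = \<zero>\<^bsub>B\<^esub>}"

definition canon :: "('a, 'm) ring_scheme \<Rightarrow> 'a set \<Rightarrow> 'a \<Rightarrow> 'a set" where
  "canon R I x = I +>\<^bsub>R\<^esub> x"

definition p_one :: "('a, 'm) ring_scheme \<Rightarrow> 'a set \<Rightarrow> 'a set" where
  "p_one R S = ass_l S R <+>\<^bsub>R\<^esub> ass_r S R"

definition p_succ :: "('a, 'm) ring_scheme \<Rightarrow> 'a set \<Rightarrow> 'a set \<Rightarrow> 'a set" where
  "p_succ R S I = {x \<in> carrier R. canon R I x \<in>
      ass_l (canon R I ` S) (R Quot I) <+>\<^bsub>R Quot I\<^esub> ass_r (canon R I ` S) (R Quot I)}"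

text \<open>The transfinite sequence (p_\<alpha>)_{\<alpha>\<ge>1}, encoded without ordinals: the set of all stages is
  the least family containing p_1, closed under the successor step and under unions of
  nonempty subfamilies (limit stages).  p(S) is the union of all stages.\<close>
inductive_set p_stages :: "('a, 'm) ring_scheme \<Rightarrow> 'a set \<Rightarrow> 'a set set"
  for R :: "('a, 'm) ring_scheme" and S :: "'a set" where
  base: "p_one R S \<in> p_stages R S"
| succ: "I \<in> p_stages R S \<Longrightarrow> p_succ R S I \<in> p_stages R S"
| lim: "\<forall>I\<in>C. I \<in> p_stages R S \<Longrightarrow> \<exists>I. I \<in> C \<Longrightarrow> \<Union>C \<in> p_stages R S"

definition p_of :: "('a, 'm) ring_scheme \<Rightarrow> 'a set \<Rightarrow> 'a set" where
  "p_of R S = \<Union>(p_stages R S)"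

definition inverts :: "('a, 'm) ring_scheme \<Rightarrow> 'a set \<Rightarrow> ('b, 'n) ring_scheme \<Rightarrow> ('a \<Rightarrow> 'b) \<Rightarrow> bool" where
  "inverts R S Q f \<longleftrightarrow> ring Q \<and> f \<in> ring_hom R Q \<and> (\<forall>s\<in>S. f s \<in> Units Q)"

text \<open>Universal property of (Q,f) with respect to all test pairs (Q',f') whose ring Q'
  has elements of type 't (types cannot be quantified inside HOL formulas).\<close>
definition universal_for ::
  "('a, 'm) ring_scheme \<Rightarrow> 'a set \<Rightarrow> ('b, 'n) ring_scheme \<Rightarrow> ('a \<Rightarrow> 'b) \<Rightarrow> 't itself \<Rightarrow> bool" where
  "universal_for R S Q f _ \<longleftrightarrow> inverts R S Q f \<and>
     (\<forall>(Q' :: 't ring) f'. inverts R S Q' f' \<longrightarrow>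
        (\<exists>h. h \<in> ring_hom Q Q' \<and> (\<forall>r\<in>carrier R. f' r = h (f r)) \<and>
             (\<forall>h'. h' \<in> ring_hom Q Q' \<and> (\<forall>r\<in>carrier R. f' r = h' (f r)) \<longrightarrow>
                   (\<forall>q\<in>carrier Q. h' q = h q))))"

definition left_localization ::
  "('b, 'n) ring_scheme \<Rightarrow> 'b set \<Rightarrow> ('c, 'k) ring_scheme \<Rightarrow> ('b \<Rightarrow> 'c) \<Rightarrow> bool" where
  "left_localization B T Q \<phi> \<longleftrightarrow> ring Q \<and> \<phi> \<in> ring_hom B Q \<and> (\<forall>t\<in>T. \<phi> t \<in> Units Q) \<and>
     (\<forall>q\<in>carrier Q. \<exists>t\<in>T. \<exists>b\<in>carrier B. q = inv\<^bsub>Q\<^esub> (\<phi> t) \<otimes>\<^bsub>Q\<^esub> \<phi> b) \<and>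
     {b \<in> carrier B. \<phi> b = \<zero>\<^bsub>Q\<^esub>} = ass_l T B"

end

theory Submission
  imports Defs
begin

text \<open>A ring homomorphism \<open>f\<close> inverting \<open>S\<close> kills \<open>ass_l(S) + ass_r(S)\<close>: if \<open>s a = 0\<close> then
  \<open>f a = f(s)\<inverse> f(s a) = 0\<close>, and symmetrically. By transfinite induction it kills every stage
  \<open>\<pp>\<^sub>\<alpha>\<close>, hence \<open>\<pp>(S)\<close>, and so factors through \<open>R/\<pp>(S)\<close>. There the image of \<open>S\<close> is still
  an Ore set, and it consists of regular elements, because \<open>s a \<in> \<pp>\<^sub>\<alpha>\<close> puts \<open>a\<close> into
  \<open>\<pp>\<^sub>\<alpha>\<^sub>+\<^sub>1\<close>. So the classical ring of left fractions of \<open>R/\<pp>(S)\<close> exists; it is universal among rings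
  inverting the image of \<open>S\<close>, hence the composite \<open>R \<rightarrow> R/\<pp>(S) \<rightarrow> \<pi>(S)\<inverse>(R/\<pp>(S))\<close> is universal for
  \<open>S\<close>, and universal pairs are unique up to isomorphism. The stages form a chain of ideals by
  Zermelo's tower argument, which is what makes their union an ideal.\<close>

section \<open>Towers of sets\<close>

inductive_set tower :: "'x set \<Rightarrow> ('x set \<Rightarrow> 'x set) \<Rightarrow> 'x set set" for b g where
  base: "b \<in> tower b g"
| step: "Z \<in> tower b g \<Longrightarrow> g Z \<in> tower b g"
| Union: "\<forall>Z\<in>C. Z \<in> tower b g \<Longrightarrow> \<exists>Z. Z \<in> C \<Longrightarrow> \<Union>C \<in> tower b g"

definition tower_normal :: "'x set \<Rightarrow> ('x set \<Rightarrow> 'x set) \<Rightarrow> 'x set \<Rightarrow> bool" where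
  "tower_normal b g M \<longleftrightarrow> (\<forall>Z\<in>tower b g. Z \<subseteq> M \<longrightarrow> Z = M \<or> g Z \<subseteq> M)"

context
  fixes g :: "'x set \<Rightarrow> 'x set"
  assumes inflationary: "\<And>Z. Z \<subseteq> g Z"
begin

lemma tower_lower_bound: "Z \<in> tower b g \<Longrightarrow> b \<subseteq> Z"
  by (induction rule: tower.induct) (use inflationary in blast)+

lemma tower_normal_comparable:
  assumes "M \<in> tower b g" and "tower_normal b g M"
  shows "Z \<in> tower b g \<Longrightarrow> Z \<subseteq> M \<or> g M \<subseteq> Z"
proof (induction rule: tower.induct)
  case base
  show ?case using tower_lower_bound[OF assms(1)] by simp
next
  case (step Z)
  then show ?case using assms(2) inflationary[of Z] unfolding tower_normal_def by blast
next
  case (Union C)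
  then show ?case by blast
qed

lemma tower_normal_step:
  assumes M: "M \<in> tower b g" and normal: "tower_normal b g M"
  shows "tower_normal b g (g M)"
  unfolding tower_normal_def
proof (intro ballI impI)
  fix Z assume Z: "Z \<in> tower b g" "Z \<subseteq> g M"
  from tower_normal_comparable[OF M normal Z(1)] consider "Z \<subseteq> M" | "g M \<subseteq> Z" by blast
  then show "Z = g M \<or> g Z \<subseteq> g M"
  proof cases
    case 1
    then show ?thesis using normal Z(1) inflationary[of M] unfolding tower_normal_def by blast
  next
    case 2
    then show ?thesis using Z(2) by blast
  qed
qed

lemma tower_normal_Union:
  assumes member: "\<And>M. M \<in> C \<Longrightarrow> M \<in> tower b g"
    and normal: "\<And>M. M \<in> C \<Longrightarrow> tower_normal b g M"
  shows "tower_normal b g (\<Union>C)"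
  unfolding tower_normal_def
proof (intro ballI impI)
  have comparable: "Z \<subseteq> M \<or> g M \<subseteq> Z" if "M \<in> C" "Z \<in> tower b g" for M Z
    using tower_normal_comparable[OF member normal] that by blast
  fix Z assume Z: "Z \<in> tower b g" "Z \<subseteq> \<Union>C"
  show "Z = \<Union>C \<or> g Z \<subseteq> \<Union>C"
  proof (cases "\<forall>M\<in>C. g M \<subseteq> Z")
    case True
    then show ?thesis using Z(2) inflationary by blast
  next
    case False
    then obtain M where M: "M \<in> C" "\<not> g M \<subseteq> Z" by blast
    then have "Z \<subseteq> M" using comparable Z(1) by blast
    with normal[OF M(1)] Z(1) consider "g Z \<subseteq> M" | "Z = M"
      unfolding tower_normal_def by blast
    then show ?thesis
    proof cases
      case 1
      then show ?thesis using M(1) by blast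
    next
      case 2
      have "M' \<subseteq> M \<or> g M \<subseteq> M'" if "M' \<in> C" for M'
        using comparable[OF M(1) member[OF that]] .
      then show ?thesis using 2 M(1) Z(2) by blast
    qed
  qed
qed

lemma tower_normal: "M \<in> tower b g \<Longrightarrow> tower_normal b g M"
proof (induction rule: tower.induct)
  case base
  then show ?case using tower_lower_bound unfolding tower_normal_def by blast
next
  case (step M)
  then show ?case by (rule tower_normal_step)
next
  case (Union C)
  then show ?case using tower_normal_Union by blast
qed

lemma tower_linear: "Z \<in> tower b g \<Longrightarrow> Y \<in> tower b g \<Longrightarrow> Z \<subseteq> Y \<or> Y \<subseteq> Z"
  using tower_normal_comparable[OF _ tower_normal] inflationary by blast

end

section \<open>The ring of left fractions at a regular left Ore set\<close>

locale regular_left_ore = ring B for B (structure) +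
  fixes T :: "'a set"
  assumes denominators_closed: "T \<subseteq> carrier B"
    and one_denominator: "\<one> \<in> T"
    and mult_denominator: "\<And>s t. s \<in> T \<Longrightarrow> t \<in> T \<Longrightarrow> s \<otimes> t \<in> T"
    and left_ore: "\<And>r s. r \<in> carrier B \<Longrightarrow> s \<in> T \<Longrightarrow> \<exists>s'\<in>T. \<exists>r'\<in>carrier B. s' \<otimes> r = r' \<otimes> s"
    and denominator_regular_left: "\<And>t x. t \<in> T \<Longrightarrow> x \<in> carrier B \<Longrightarrow> t \<otimes> x = \<zero> \<Longrightarrow> x = \<zero>"
    and denominator_regular_right: "\<And>t x. t \<in> T \<Longrightarrow> x \<in> carrier B \<Longrightarrow> x \<otimes> t = \<zero> \<Longrightarrow> x = \<zero>"
begin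

lemma denominator_carrier [simp]: "t \<in> T \<Longrightarrow> t \<in> carrier B"
  using denominators_closed by auto

lemma denominator_cancel_left:
  assumes "t \<in> T" "x \<in> carrier B" "y \<in> carrier B" "t \<otimes> x = t \<otimes> y"
  shows "x = y"
proof -
  have "t \<otimes> (x \<ominus> y) = \<zero>"
    using assms by (simp add: r_distr minus_eq r_minus r_neg)
  then show ?thesis
    using denominator_regular_left assms by (metis minus_closed r_right_minus_eq)
qed

lemma denominator_cancel_right:
  assumes "t \<in> T" "x \<in> carrier B" "y \<in> carrier B" "x \<otimes> t = y \<otimes> t"
  shows "x = y"
proof -
  have "(x \<ominus> y) \<otimes> t = \<zero>"
    using assms by (simp add: l_distr minus_eq l_minus r_neg)
  then show ?thesis
    using denominator_regular_right assms by (metis minus_closed r_right_minus_eq)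
qed

text \<open>A fraction \<open>q = t\<inverse> b\<close> is encoded by the graph \<open>{(x, y). x q = y}\<close> of right multiplication
  by \<open>q\<close>, restricted to those \<open>x\<close> for which \<open>x q\<close> lies in \<open>B\<close>. Such graphs are the left
  \<open>B\<close>-linear partial maps defined at some denominator (\<open>lin_graph\<close>) from which denominators
  can be cancelled on the left (\<open>saturated\<close>); no quotient of \<open>B \<times> T\<close> is needed.\<close>

definition lin_graph :: "('a \<times> 'a) set \<Rightarrow> bool" where
  "lin_graph H \<longleftrightarrow> H \<subseteq> carrier B \<times> carrier B \<and>
     (\<forall>x y y'. (x, y) \<in> H \<longrightarrow> (x, y') \<in> H \<longrightarrow> y = y') \<and>
     (\<forall>x y c. (x, y) \<in> H \<longrightarrow> c \<in> carrier B \<longrightarrow> (c \<otimes> x, c \<otimes> y) \<in> H) \<and>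
     (\<forall>x y x' y'. (x, y) \<in> H \<longrightarrow> (x', y') \<in> H \<longrightarrow> (x \<oplus> x', y \<oplus> y') \<in> H) \<and>
     (\<exists>t\<in>T. \<exists>y. (t, y) \<in> H)"

definition saturated :: "('a \<times> 'a) set \<Rightarrow> bool" where
  "saturated F \<longleftrightarrow>
     (\<forall>u\<in>T. \<forall>x\<in>carrier B. \<forall>y\<in>carrier B. (u \<otimes> x, u \<otimes> y) \<in> F \<longrightarrow> (x, y) \<in> F)"

definition fracs :: "('a \<times> 'a) set set" where
  "fracs = {F. lin_graph F \<and> saturated F}"

definition saturation :: "('a \<times> 'a) set \<Rightarrow> ('a \<times> 'a) set" where
  "saturation H = {(x, y). x \<in> carrier B \<and> y \<in> carrier B \<and> (\<exists>u\<in>T. (u \<otimes> x, u \<otimes> y) \<in> H)}"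

definition frac_add :: "('a \<times> 'a) set \<Rightarrow> ('a \<times> 'a) set \<Rightarrow> ('a \<times> 'a) set" where
  "frac_add F G = saturation {(x, y \<oplus> z) | x y z. (x, y) \<in> F \<and> (x, z) \<in> G}"

definition frac_neg :: "('a \<times> 'a) set \<Rightarrow> ('a \<times> 'a) set" where
  "frac_neg F = saturation {(x, \<ominus> y) | x y. (x, y) \<in> F}"

definition frac_mult :: "('a \<times> 'a) set \<Rightarrow> ('a \<times> 'a) set \<Rightarrow> ('a \<times> 'a) set" where
  "frac_mult F G = saturation (F O G)"

definition frac_ring :: "('a \<times> 'a) set ring" where
  "frac_ring = \<lparr>carrier = fracs, monoid.mult = frac_mult, monoid.one = Id_on (carrier B),
     ring.zero = carrier B \<times> {\<zero>}, ring.add = frac_add\<rparr>"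

lemma frac_ring_simps [simp]:
  "carrier frac_ring = fracs" "monoid.mult frac_ring = frac_mult" "monoid.one frac_ring = Id_on (carrier B)"
  "ring.zero frac_ring = carrier B \<times> {\<zero>}" "ring.add frac_ring = frac_add"
  by (simp_all add: frac_ring_def)

lemma lin_graphI:
  assumes "H \<subseteq> carrier B \<times> carrier B"
    and "\<And>x y y'. (x, y) \<in> H \<Longrightarrow> (x, y') \<in> H \<Longrightarrow> y = y'"
    and "\<And>x y c. (x, y) \<in> H \<Longrightarrow> c \<in> carrier B \<Longrightarrow> (c \<otimes> x, c \<otimes> y) \<in> H"
    and "\<And>x y x' y'. (x, y) \<in> H \<Longrightarrow> (x', y') \<in> H \<Longrightarrow> (x \<oplus> x', y \<oplus> y') \<in> H"
    and "t \<in> T" "(t, y) \<in> H"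
  shows "lin_graph H"
  unfolding lin_graph_def using assms by blast

lemma lin_graphD:
  assumes "lin_graph H"
  shows "H \<subseteq> carrier B \<times> carrier B"
    and "\<And>x y y'. (x, y) \<in> H \<Longrightarrow> (x, y') \<in> H \<Longrightarrow> y = y'"
    and "\<And>x y c. (x, y) \<in> H \<Longrightarrow> c \<in> carrier B \<Longrightarrow> (c \<otimes> x, c \<otimes> y) \<in> H"
    and "\<And>x y x' y'. (x, y) \<in> H \<Longrightarrow> (x', y') \<in> H \<Longrightarrow> (x \<oplus> x', y \<oplus> y') \<in> H"
    and "\<exists>t\<in>T. \<exists>y. (t, y) \<in> H"
  using assms unfolding lin_graph_def by blast+

lemma fracsI: "lin_graph F \<Longrightarrow> saturated F \<Longrightarrow> F \<in> fracs"
  unfolding fracs_def by blast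

context
  fixes F assumes F: "F \<in> fracs"
begin

lemma fracs_carrier: "(x, y) \<in> F \<Longrightarrow> x \<in> carrier B \<and> y \<in> carrier B"
  using F lin_graphD(1) unfolding fracs_def by blast

lemma fracs_functional: "(x, y) \<in> F \<Longrightarrow> (x, y') \<in> F \<Longrightarrow> y = y'"
  using F lin_graphD(2) unfolding fracs_def by blast

lemma fracs_smult: "(x, y) \<in> F \<Longrightarrow> c \<in> carrier B \<Longrightarrow> (c \<otimes> x, c \<otimes> y) \<in> F"
  using F lin_graphD(3) unfolding fracs_def by blast

lemma fracs_add: "(x, y) \<in> F \<Longrightarrow> (x', y') \<in> F \<Longrightarrow> (x \<oplus> x', y \<oplus> y') \<in> F"
  using F lin_graphD(4) unfolding fracs_def by blast

lemma fracs_denominator: "\<exists>t\<in>T. \<exists>y. (t, y) \<in> F"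
  using F lin_graphD(5) unfolding fracs_def by blast

lemma fracs_saturated:
  "u \<in> T \<Longrightarrow> x \<in> carrier B \<Longrightarrow> y \<in> carrier B \<Longrightarrow> (u \<otimes> x, u \<otimes> y) \<in> F \<Longrightarrow> (x, y) \<in> F"
  using F unfolding fracs_def saturated_def by blast

lemma fracs_defined_at_multiple:
  assumes x: "x \<in> carrier B" shows "\<exists>u\<in>T. \<exists>y. (u \<otimes> x, y) \<in> F"
proof -
  obtain t y where t: "t \<in> T" "(t, y) \<in> F" using fracs_denominator by blast
  obtain s' r' where "s' \<in> T" "r' \<in> carrier B" "s' \<otimes> x = r' \<otimes> t"
    using left_ore[OF x t(1)] by blast
  then show ?thesis using fracs_smult[OF t(2)] by metis
qed

end

text \<open>An element of the ring of fractions is determined by its value at a single denominator;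
  every identity in the ring is verified this way.\<close>

lemma frac_eqI:
  assumes F: "F \<in> fracs" and G: "G \<in> fracs" and t: "t \<in> T" "(t, y) \<in> F" "(t, y) \<in> G"
  shows "F = G"
proof -
  have "F \<subseteq> G" if F: "F \<in> fracs" and G: "G \<in> fracs" and t: "(t, y) \<in> F" "(t, y) \<in> G" for F G
  proof
    fix p assume "p \<in> F"
    then obtain x z where p: "p = (x, z)" "(x, z) \<in> F" by (cases p) auto
    have xz: "x \<in> carrier B" "z \<in> carrier B" using fracs_carrier[OF F p(2)] by auto
    obtain u c where uc: "u \<in> T" "c \<in> carrier B" "u \<otimes> x = c \<otimes> t"
      using left_ore[OF xz(1) \<open>t \<in> T\<close>] by blast
    have "(c \<otimes> t, c \<otimes> y) \<in> F" "(c \<otimes> t, c \<otimes> y) \<in> G"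
      using fracs_smult F G t uc(2) by auto
    moreover have "(u \<otimes> x, u \<otimes> z) \<in> F" using fracs_smult[OF F p(2)] uc(1) by simp
    ultimately have "(u \<otimes> x, u \<otimes> z) \<in> G" using fracs_functional[OF F] uc(3) by metis
    then show "p \<in> G" using fracs_saturated[OF G uc(1) xz] p(1) by simp
  qed
  then show ?thesis using assms by blast
qed

lemma saturation_subset: "H \<subseteq> carrier B \<times> carrier B \<Longrightarrow> H \<subseteq> saturation H"
  unfolding saturation_def using one_denominator by force

lemma saturationI:
  "x \<in> carrier B \<Longrightarrow> y \<in> carrier B \<Longrightarrow> u \<in> T \<Longrightarrow> (u \<otimes> x, u \<otimes> y) \<in> H \<Longrightarrow> (x, y) \<in> saturation H"
  unfolding saturation_def by blast

lemma saturationE: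
  assumes "(x, y) \<in> saturation H"
  obtains u where "u \<in> T" "(u \<otimes> x, u \<otimes> y) \<in> H" "x \<in> carrier B" "y \<in> carrier B"
  using assms unfolding saturation_def by blast

context
  fixes H assumes H: "lin_graph H"
begin

lemma saturation_functional:
  assumes "(x, y) \<in> saturation H" "(x, y') \<in> saturation H" shows "y = y'"
proof -
  obtain u u' where u: "u \<in> T" "(u \<otimes> x, u \<otimes> y) \<in> H" "u' \<in> T" "(u' \<otimes> x, u' \<otimes> y') \<in> H"
    and c: "x \<in> carrier B" "y \<in> carrier B" "y' \<in> carrier B"
    using assms by (elim saturationE) blast
  obtain s r where sr: "s \<in> T" "r \<in> carrier B" "s \<otimes> u = r \<otimes> u'"
    using left_ore[of u u'] u by auto
  have uc: "u \<in> carrier B" "u' \<in> carrier B" "s \<in> carrier B" using u sr by auto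
  have "(s \<otimes> (u \<otimes> x), s \<otimes> (u \<otimes> y)) \<in> H" "(r \<otimes> (u' \<otimes> x), r \<otimes> (u' \<otimes> y')) \<in> H"
    using lin_graphD(3)[OF H u(2) uc(3)] lin_graphD(3)[OF H u(4) sr(2)] .
  moreover have "s \<otimes> (u \<otimes> x) = r \<otimes> (u' \<otimes> x)"
    using sr(2,3) uc c(1) by (simp flip: m_assoc)
  ultimately have "s \<otimes> (u \<otimes> y) = r \<otimes> (u' \<otimes> y')" using lin_graphD(2)[OF H] by metis
  then have "(s \<otimes> u) \<otimes> y = (s \<otimes> u) \<otimes> y'"
    using sr(2,3) uc c(2,3) by (simp flip: m_assoc)
  then show ?thesis using denominator_cancel_left[OF mult_denominator[OF sr(1) u(1)]] c by blast
qed

lemma saturation_add: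
  assumes "(x, y) \<in> saturation H" "(x', y') \<in> saturation H"
  shows "(x \<oplus> x', y \<oplus> y') \<in> saturation H"
proof -
  obtain u u' where u: "u \<in> T" "(u \<otimes> x, u \<otimes> y) \<in> H" "u' \<in> T" "(u' \<otimes> x', u' \<otimes> y') \<in> H"
    and c: "x \<in> carrier B" "y \<in> carrier B" "x' \<in> carrier B" "y' \<in> carrier B"
    using assms by (elim saturationE) blast
  obtain s r where sr: "s \<in> T" "r \<in> carrier B" "s \<otimes> u = r \<otimes> u'"
    using left_ore[of u u'] u by auto
  have "(s \<otimes> (u \<otimes> x), s \<otimes> (u \<otimes> y)) \<in> H" "(r \<otimes> (u' \<otimes> x'), r \<otimes> (u' \<otimes> y')) \<in> H"
    using lin_graphD(3)[OF H u(2)] lin_graphD(3)[OF H u(4) sr(2)] sr(1) by simp_all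
  then have "(s \<otimes> (u \<otimes> x) \<oplus> r \<otimes> (u' \<otimes> x'), s \<otimes> (u \<otimes> y) \<oplus> r \<otimes> (u' \<otimes> y')) \<in> H"
    by (rule lin_graphD(4)[OF H])
  moreover have "s \<otimes> (u \<otimes> x) \<oplus> r \<otimes> (u' \<otimes> x') = (s \<otimes> u) \<otimes> (x \<oplus> x')"
    "s \<otimes> (u \<otimes> y) \<oplus> r \<otimes> (u' \<otimes> y') = (s \<otimes> u) \<otimes> (y \<oplus> y')"
    using sr u c by (simp_all add: r_distr m_assoc[symmetric])
  ultimately have "((s \<otimes> u) \<otimes> (x \<oplus> x'), (s \<otimes> u) \<otimes> (y \<oplus> y')) \<in> H" by (simp only:)
  then show ?thesis using saturationI[OF _ _ mult_denominator[OF sr(1) u(1)]] c by simp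
qed

lemma saturation_smult:
  assumes "(x, y) \<in> saturation H" "c \<in> carrier B"
  shows "(c \<otimes> x, c \<otimes> y) \<in> saturation H"
proof -
  obtain u where u: "u \<in> T" "(u \<otimes> x, u \<otimes> y) \<in> H" and xy: "x \<in> carrier B" "y \<in> carrier B"
    using assms(1) by (elim saturationE)
  obtain s r where sr: "s \<in> T" "r \<in> carrier B" "s \<otimes> c = r \<otimes> u" using left_ore[OF assms(2) u(1)] by blast
  have "(r \<otimes> (u \<otimes> x), r \<otimes> (u \<otimes> y)) \<in> H" using lin_graphD(3)[OF H u(2) sr(2)] .
  moreover have "r \<otimes> (u \<otimes> x) = s \<otimes> (c \<otimes> x)" "r \<otimes> (u \<otimes> y) = s \<otimes> (c \<otimes> y)"
    using sr xy assms(2) u(1) by (metis m_assoc denominator_carrier)+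
  ultimately show ?thesis using saturationI sr xy assms(2) by auto
qed

lemma saturation_fracs: "saturation H \<in> fracs"
proof (rule fracsI)
  obtain t y where t: "t \<in> T" "(t, y) \<in> H" using lin_graphD(5)[OF H] by blast
  have ty: "(t, y) \<in> saturation H" using saturation_subset[OF lin_graphD(1)[OF H]] t(2) by blast
  show "lin_graph (saturation H)"
    by (rule lin_graphI[OF _ saturation_functional saturation_smult saturation_add t(1) ty])
      (auto simp: saturation_def)
  show "saturated (saturation H)" unfolding saturated_def
  proof (intro ballI impI)
    fix u x y assume a: "u \<in> T" "x \<in> carrier B" "y \<in> carrier B" "(u \<otimes> x, u \<otimes> y) \<in> saturation H"
    then obtain v where v: "v \<in> T" "(v \<otimes> (u \<otimes> x), v \<otimes> (u \<otimes> y)) \<in> H"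
      by (elim saturationE)
    then have "((v \<otimes> u) \<otimes> x, (v \<otimes> u) \<otimes> y) \<in> H" using a by (simp add: m_assoc)
    then show "(x, y) \<in> saturation H"
      using saturationI a(2,3) mult_denominator[OF v(1) a(1)] by blast
  qed
qed

end

lemma fracs_common_defined_at_multiple:
  assumes F: "F \<in> fracs" and G: "G \<in> fracs" and x: "x \<in> carrier B"
  shows "\<exists>u\<in>T. \<exists>y z. (u \<otimes> x, y) \<in> F \<and> (u \<otimes> x, z) \<in> G"
proof -
  obtain u1 y where 1: "u1 \<in> T" "(u1 \<otimes> x, y) \<in> F"
    using fracs_defined_at_multiple[OF F x] by blast
  obtain u2 z where 2: "u2 \<in> T" "(u2 \<otimes> (u1 \<otimes> x), z) \<in> G"
    using fracs_defined_at_multiple[OF G m_closed[OF denominator_carrier[OF 1(1)] x]] by blast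
  have "(u2 \<otimes> (u1 \<otimes> x), u2 \<otimes> y) \<in> F" using fracs_smult[OF F 1(2)] 2(1) by simp
  then have "((u2 \<otimes> u1) \<otimes> x, u2 \<otimes> y) \<in> F" "((u2 \<otimes> u1) \<otimes> x, z) \<in> G"
    using 1(1) 2 x by (simp_all add: m_assoc)
  with mult_denominator[OF 2(1) 1(1)] show ?thesis by blast
qed

lemma fracs_common_denominator:
  assumes F: "F \<in> fracs" and G: "G \<in> fracs"
  shows "\<exists>t\<in>T. \<exists>a b. (t, a) \<in> F \<and> (t, b) \<in> G"
proof -
  obtain t a where t: "t \<in> T" "(t, a) \<in> F" using fracs_denominator[OF F] by blast
  obtain u b where u: "u \<in> T" "(u \<otimes> t, b) \<in> G"
    using fracs_defined_at_multiple[OF G denominator_carrier[OF t(1)]] by blast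
  have "(u \<otimes> t, u \<otimes> a) \<in> F" using fracs_smult[OF F t(2)] u(1) by simp
  with u(2) mult_denominator[OF u(1) t(1)] show ?thesis by blast
qed

lemma fracs_common_denominator3:
  assumes F: "F \<in> fracs" and G: "G \<in> fracs" and K: "K \<in> fracs"
  shows "\<exists>t\<in>T. \<exists>a b c. (t, a) \<in> F \<and> (t, b) \<in> G \<and> (t, c) \<in> K"
proof -
  obtain t a where t: "t \<in> T" "(t, a) \<in> F" using fracs_denominator[OF F] by blast
  obtain u b c where u: "u \<in> T" "(u \<otimes> t, b) \<in> G" "(u \<otimes> t, c) \<in> K"
    using fracs_common_defined_at_multiple[OF G K denominator_carrier[OF t(1)]] by blast
  have "(u \<otimes> t, u \<otimes> a) \<in> F" using fracs_smult[OF F t(2)] u(1) by simp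
  with u(2,3) mult_denominator[OF u(1) t(1)] show ?thesis by blast
qed

lemma fracs_chain:
  assumes F: "F \<in> fracs" and G: "G \<in> fracs"
  shows "\<exists>t\<in>T. \<exists>a b. (t, a) \<in> F \<and> (a, b) \<in> G"
proof -
  obtain t a where t: "t \<in> T" "(t, a) \<in> F" using fracs_denominator[OF F] by blast
  obtain u b where u: "u \<in> T" "(u \<otimes> a, b) \<in> G"
    using fracs_defined_at_multiple[OF G] fracs_carrier[OF F t(2)] by blast
  have "(u \<otimes> t, u \<otimes> a) \<in> F" using fracs_smult[OF F t(2)] u(1) by simp
  with u(2) mult_denominator[OF u(1) t(1)] show ?thesis by blast
qed

lemma fracs_chain3:
  assumes F: "F \<in> fracs" and G: "G \<in> fracs" and K: "K \<in> fracs"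
  shows "\<exists>t\<in>T. \<exists>a b c. (t, a) \<in> F \<and> (a, b) \<in> G \<and> (b, c) \<in> K"
proof -
  obtain t a b where t: "t \<in> T" "(t, a) \<in> F" "(a, b) \<in> G" using fracs_chain[OF F G] by blast
  obtain u c where u: "u \<in> T" "(u \<otimes> b, c) \<in> K"
    using fracs_defined_at_multiple[OF K] fracs_carrier[OF G t(3)] by blast
  have "(u \<otimes> t, u \<otimes> a) \<in> F" "(u \<otimes> a, u \<otimes> b) \<in> G"
    using fracs_smult[OF F t(2)] fracs_smult[OF G t(3)] u(1) by simp_all
  with u(2) mult_denominator[OF u(1) t(1)] show ?thesis by blast
qed

lemma lin_graph_sum:
  assumes F: "F \<in> fracs" and G: "G \<in> fracs"
  shows "lin_graph {(x, y \<oplus> z) | x y z. (x, y) \<in> F \<and> (x, z) \<in> G}" (is "lin_graph ?H")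
proof -
  obtain t a b where t: "t \<in> T" "(t, a) \<in> F" "(t, b) \<in> G"
    using fracs_common_denominator[OF F G] by blast
  show ?thesis
  proof (rule lin_graphI[OF _ _ _ _ t(1)])
    show "?H \<subseteq> carrier B \<times> carrier B" using fracs_carrier[OF F] fracs_carrier[OF G] by blast
    show "(t, a \<oplus> b) \<in> ?H" using t by blast
    show "w = w'" if "(x, w) \<in> ?H" "(x, w') \<in> ?H" for x w w'
      using that fracs_functional[OF F] fracs_functional[OF G] by blast
    show "(c \<otimes> x, c \<otimes> w) \<in> ?H" if w: "(x, w) \<in> ?H" and c: "c \<in> carrier B" for x w c
    proof -
      obtain y z where yz: "w = y \<oplus> z" "(x, y) \<in> F" "(x, z) \<in> G" using w by blast
      then have "c \<otimes> w = c \<otimes> y \<oplus> c \<otimes> z"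
        using fracs_carrier[OF F] fracs_carrier[OF G] c by (simp add: r_distr)
      then show ?thesis using fracs_smult[OF F yz(2) c] fracs_smult[OF G yz(3) c] by blast
    qed
    show "(x \<oplus> x', w \<oplus> w') \<in> ?H" if w: "(x, w) \<in> ?H" "(x', w') \<in> ?H" for x w x' w'
    proof -
      obtain y z y' z' where yz: "w = y \<oplus> z" "(x, y) \<in> F" "(x, z) \<in> G"
        "w' = y' \<oplus> z'" "(x', y') \<in> F" "(x', z') \<in> G" using w by blast
      then have "w \<oplus> w' = (y \<oplus> y') \<oplus> (z \<oplus> z')"
        using fracs_carrier[OF F] fracs_carrier[OF G] by (simp add: a_ac)
      then show ?thesis using fracs_add[OF F yz(2,5)] fracs_add[OF G yz(3,6)] by blast
    qed
  qed
qed

lemma lin_graph_neg: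
  assumes F: "F \<in> fracs"
  shows "lin_graph {(x, \<ominus> y) | x y. (x, y) \<in> F}" (is "lin_graph ?H")
proof -
  obtain t a where t: "t \<in> T" "(t, a) \<in> F" using fracs_denominator[OF F] by blast
  show ?thesis
  proof (rule lin_graphI[OF _ _ _ _ t(1)])
    show "?H \<subseteq> carrier B \<times> carrier B" using fracs_carrier[OF F] by blast
    show "(t, \<ominus> a) \<in> ?H" using t by blast
    show "w = w'" if "(x, w) \<in> ?H" "(x, w') \<in> ?H" for x w w'
      using that fracs_functional[OF F] by blast
    show "(c \<otimes> x, c \<otimes> w) \<in> ?H" if w: "(x, w) \<in> ?H" and c: "c \<in> carrier B" for x w c
    proof -
      obtain y where y: "w = \<ominus> y" "(x, y) \<in> F" using w by blast
      then have "c \<otimes> w = \<ominus> (c \<otimes> y)" using fracs_carrier[OF F] c by (simp add: r_minus)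
      then show ?thesis using fracs_smult[OF F y(2) c] by blast
    qed
    show "(x \<oplus> x', w \<oplus> w') \<in> ?H" if w: "(x, w) \<in> ?H" "(x', w') \<in> ?H" for x w x' w'
    proof -
      obtain y y' where y: "w = \<ominus> y" "(x, y) \<in> F" "w' = \<ominus> y'" "(x', y') \<in> F" using w by blast
      then have "w \<oplus> w' = \<ominus> (y \<oplus> y')" using fracs_carrier[OF F] by (simp add: minus_add)
      then show ?thesis using fracs_add[OF F y(2,4)] by blast
    qed
  qed
qed

lemma lin_graph_comp:
  assumes F: "F \<in> fracs" and G: "G \<in> fracs"
  shows "lin_graph (F O G)"
proof -
  obtain t a b where t: "t \<in> T" "(t, a) \<in> F" "(a, b) \<in> G" using fracs_chain[OF F G] by blast
  show ?thesis
  proof (rule lin_graphI[OF _ _ _ _ t(1)])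
    show "F O G \<subseteq> carrier B \<times> carrier B" using fracs_carrier[OF F] fracs_carrier[OF G] by blast
    show "(t, b) \<in> F O G" using t by blast
    show "y = y'" if "(x, y) \<in> F O G" "(x, y') \<in> F O G" for x y y'
      using that fracs_functional[OF F] fracs_functional[OF G] by blast
    show "(c \<otimes> x, c \<otimes> y) \<in> F O G" if "(x, y) \<in> F O G" "c \<in> carrier B" for x y c
      using that fracs_smult[OF F] fracs_smult[OF G] by blast
    show "(x \<oplus> x', y \<oplus> y') \<in> F O G" if "(x, y) \<in> F O G" "(x', y') \<in> F O G" for x y x' y'
      using that fracs_add[OF F] fracs_add[OF G] by blast
  qed
qed

lemma frac_add_closed: "F \<in> fracs \<Longrightarrow> G \<in> fracs \<Longrightarrow> frac_add F G \<in> fracs"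
  unfolding frac_add_def by (rule saturation_fracs[OF lin_graph_sum])

lemma frac_neg_closed: "F \<in> fracs \<Longrightarrow> frac_neg F \<in> fracs"
  unfolding frac_neg_def by (rule saturation_fracs[OF lin_graph_neg])

lemma frac_mult_closed: "F \<in> fracs \<Longrightarrow> G \<in> fracs \<Longrightarrow> frac_mult F G \<in> fracs"
  unfolding frac_mult_def by (rule saturation_fracs[OF lin_graph_comp])

lemma frac_add_mem:
  assumes "F \<in> fracs" "G \<in> fracs" "(x, y) \<in> F" "(x, z) \<in> G"
  shows "(x, y \<oplus> z) \<in> frac_add F G"
  unfolding frac_add_def using assms saturation_subset[OF lin_graphD(1)[OF lin_graph_sum]] by blast

lemma frac_neg_mem:
  assumes "F \<in> fracs" "(x, y) \<in> F"
  shows "(x, \<ominus> y) \<in> frac_neg F"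
  unfolding frac_neg_def using assms saturation_subset[OF lin_graphD(1)[OF lin_graph_neg]] by blast

lemma frac_mult_mem:
  assumes "F \<in> fracs" "G \<in> fracs" "(x, y) \<in> F" "(y, z) \<in> G"
  shows "(x, z) \<in> frac_mult F G"
  unfolding frac_mult_def using assms saturation_subset[OF lin_graphD(1)[OF lin_graph_comp]] by blast

lemma zero_fracs: "carrier B \<times> {\<zero>} \<in> fracs"
proof (rule fracsI)
  show "lin_graph (carrier B \<times> {\<zero>})"
    by (rule lin_graphI[OF _ _ _ _ one_denominator, of _ \<zero>]) auto
  show "saturated (carrier B \<times> {\<zero>})"
    unfolding saturated_def by (blast intro: denominator_regular_left)
qed

lemma one_fracs: "Id_on (carrier B) \<in> fracs"
proof (rule fracsI)
  show "lin_graph (Id_on (carrier B))"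
    by (rule lin_graphI[OF _ _ _ _ one_denominator, of _ \<one>]) auto
  show "saturated (Id_on (carrier B))"
    unfolding saturated_def Id_on_iff using denominator_cancel_left by blast
qed

lemma frac_add_assoc:
  assumes F: "F \<in> fracs" and G: "G \<in> fracs" and K: "K \<in> fracs"
  shows "frac_add (frac_add F G) K = frac_add F (frac_add G K)"
proof -
  obtain t a b c where t: "t \<in> T" "(t, a) \<in> F" "(t, b) \<in> G" "(t, c) \<in> K"
    using fracs_common_denominator3[OF F G K] by blast
  have "(t, (a \<oplus> b) \<oplus> c) \<in> frac_add (frac_add F G) K"
    using frac_add_mem[OF frac_add_closed[OF F G] K frac_add_mem[OF F G t(2,3)] t(4)] .
  moreover have "(t, (a \<oplus> b) \<oplus> c) \<in> frac_add F (frac_add G K)"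
    using frac_add_mem[OF F frac_add_closed[OF G K] t(2) frac_add_mem[OF G K t(3,4)]]
      fracs_carrier[OF F t(2)] fracs_carrier[OF G t(3)] fracs_carrier[OF K t(4)]
    by (simp add: a_assoc)
  ultimately show ?thesis
    by (rule frac_eqI[OF frac_add_closed[OF frac_add_closed[OF F G] K]
          frac_add_closed[OF F frac_add_closed[OF G K]] t(1)])
qed

lemma frac_add_comm:
  assumes F: "F \<in> fracs" and G: "G \<in> fracs"
  shows "frac_add F G = frac_add G F"
proof -
  obtain t a b where t: "t \<in> T" "(t, a) \<in> F" "(t, b) \<in> G"
    using fracs_common_denominator[OF F G] by blast
  have "(t, a \<oplus> b) \<in> frac_add F G" using frac_add_mem[OF F G t(2,3)] .
  moreover have "(t, a \<oplus> b) \<in> frac_add G F"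
    using frac_add_mem[OF G F t(3,2)] fracs_carrier[OF F t(2)] fracs_carrier[OF G t(3)]
    by (simp add: a_comm)
  ultimately show ?thesis by (rule frac_eqI[OF frac_add_closed[OF F G] frac_add_closed[OF G F] t(1)])
qed

lemma frac_zero_add:
  assumes F: "F \<in> fracs" shows "frac_add (carrier B \<times> {\<zero>}) F = F"
proof -
  obtain t a where t: "t \<in> T" "(t, a) \<in> F" using fracs_denominator[OF F] by blast
  have "(t, \<zero> \<oplus> a) \<in> frac_add (carrier B \<times> {\<zero>}) F"
    using frac_add_mem[OF zero_fracs F _ t(2)] t(1) by simp
  then have "(t, a) \<in> frac_add (carrier B \<times> {\<zero>}) F" using fracs_carrier[OF F t(2)] by simp
  then show ?thesis using frac_eqI[OF frac_add_closed[OF zero_fracs F] F t(1)] t(2) by blast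
qed

lemma frac_neg_add:
  assumes F: "F \<in> fracs" shows "frac_add (frac_neg F) F = carrier B \<times> {\<zero>}"
proof -
  obtain t a where t: "t \<in> T" "(t, a) \<in> F" using fracs_denominator[OF F] by blast
  have "(t, \<ominus> a \<oplus> a) \<in> frac_add (frac_neg F) F"
    using frac_add_mem[OF frac_neg_closed[OF F] F frac_neg_mem[OF F t(2)] t(2)] .
  then have "(t, \<zero>) \<in> frac_add (frac_neg F) F" using fracs_carrier[OF F t(2)] by (simp add: l_neg)
  moreover have "(t, \<zero>) \<in> carrier B \<times> {\<zero>}" using t(1) by simp
  ultimately show ?thesis using frac_eqI[OF frac_add_closed[OF frac_neg_closed[OF F] F] zero_fracs t(1)] by blast
qed

lemma frac_mult_assoc:
  assumes F: "F \<in> fracs" and G: "G \<in> fracs" and K: "K \<in> fracs"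
  shows "frac_mult (frac_mult F G) K = frac_mult F (frac_mult G K)"
proof -
  obtain t a b c where t: "t \<in> T" "(t, a) \<in> F" "(a, b) \<in> G" "(b, c) \<in> K"
    using fracs_chain3[OF F G K] by blast
  have "(t, c) \<in> frac_mult (frac_mult F G) K"
    using frac_mult_mem[OF frac_mult_closed[OF F G] K frac_mult_mem[OF F G t(2,3)] t(4)] .
  moreover have "(t, c) \<in> frac_mult F (frac_mult G K)"
    using frac_mult_mem[OF F frac_mult_closed[OF G K] t(2) frac_mult_mem[OF G K t(3,4)]] .
  ultimately show ?thesis
    by (rule frac_eqI[OF frac_mult_closed[OF frac_mult_closed[OF F G] K]
          frac_mult_closed[OF F frac_mult_closed[OF G K]] t(1)])
qed

lemma frac_one_mult:
  assumes F: "F \<in> fracs" shows "frac_mult (Id_on (carrier B)) F = F"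
proof -
  obtain t a where t: "t \<in> T" "(t, a) \<in> F" using fracs_denominator[OF F] by blast
  have "(t, a) \<in> frac_mult (Id_on (carrier B)) F"
    using frac_mult_mem[OF one_fracs F Id_onI[OF denominator_carrier[OF t(1)]] t(2)] .
  then show ?thesis using frac_eqI[OF frac_mult_closed[OF one_fracs F] F t(1)] t(2) by blast
qed

lemma frac_mult_one:
  assumes F: "F \<in> fracs" shows "frac_mult F (Id_on (carrier B)) = F"
proof -
  obtain t a where t: "t \<in> T" "(t, a) \<in> F" using fracs_denominator[OF F] by blast
  have "(t, a) \<in> frac_mult F (Id_on (carrier B))"
    using frac_mult_mem[OF F one_fracs t(2) Id_onI] fracs_carrier[OF F t(2)] by blast
  then show ?thesis using frac_eqI[OF frac_mult_closed[OF F one_fracs] F t(1)] t(2) by blast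
qed

lemma frac_distrib_right:
  assumes F: "F \<in> fracs" and G: "G \<in> fracs" and K: "K \<in> fracs"
  shows "frac_mult (frac_add F G) K = frac_add (frac_mult F K) (frac_mult G K)"
proof -
  obtain t0 a0 b0 where 0: "t0 \<in> T" "(t0, a0) \<in> F" "(t0, b0) \<in> G"
    using fracs_common_denominator[OF F G] by blast
  have ab0: "a0 \<in> carrier B" "b0 \<in> carrier B"
    using fracs_carrier[OF F 0(2)] fracs_carrier[OF G 0(3)] by auto
  obtain u1 c1 where 1: "u1 \<in> T" "(u1 \<otimes> a0, c1) \<in> K"
    using fracs_defined_at_multiple[OF K ab0(1)] by blast
  obtain u2 d where 2: "u2 \<in> T" "(u2 \<otimes> (u1 \<otimes> b0), d) \<in> K"
    using fracs_defined_at_multiple[OF K m_closed[OF denominator_carrier[OF 1(1)] ab0(2)]] by blast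
  define u where "u = u2 \<otimes> u1"
  have u: "u \<in> T" "u \<in> carrier B" unfolding u_def using mult_denominator 1(1) 2(1) by auto
  have t: "(u \<otimes> t0, u \<otimes> a0) \<in> F" "(u \<otimes> t0, u \<otimes> b0) \<in> G"
    using fracs_smult[OF F 0(2) u(2)] fracs_smult[OF G 0(3) u(2)] .
  have "(u2 \<otimes> (u1 \<otimes> a0), u2 \<otimes> c1) \<in> K" using fracs_smult[OF K 1(2)] 2(1) by simp
  then have c: "(u \<otimes> a0, u2 \<otimes> c1) \<in> K" unfolding u_def using 1(1) 2(1) ab0 by (simp add: m_assoc)
  have d: "(u \<otimes> b0, d) \<in> K" unfolding u_def using 2(2) 1(1) 2(1) ab0 by (simp add: m_assoc)
  have "(u \<otimes> t0, u2 \<otimes> c1 \<oplus> d) \<in> frac_mult (frac_add F G) K"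
    using frac_mult_mem[OF frac_add_closed[OF F G] K frac_add_mem[OF F G t] fracs_add[OF K c d]] .
  moreover have "(u \<otimes> t0, u2 \<otimes> c1 \<oplus> d) \<in> frac_add (frac_mult F K) (frac_mult G K)"
    using frac_add_mem[OF frac_mult_closed[OF F K] frac_mult_closed[OF G K]
        frac_mult_mem[OF F K t(1) c] frac_mult_mem[OF G K t(2) d]] .
  ultimately show ?thesis
    by (rule frac_eqI[OF frac_mult_closed[OF frac_add_closed[OF F G] K]
          frac_add_closed[OF frac_mult_closed[OF F K] frac_mult_closed[OF G K]]
          mult_denominator[OF u(1) 0(1)]])
qed

lemma frac_distrib_left:
  assumes F: "F \<in> fracs" and G: "G \<in> fracs" and K: "K \<in> fracs"
  shows "frac_mult K (frac_add F G) = frac_add (frac_mult K F) (frac_mult K G)"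
proof -
  obtain t a where t: "t \<in> T" "(t, a) \<in> K" using fracs_denominator[OF K] by blast
  obtain u b c where u: "u \<in> T" "(u \<otimes> a, b) \<in> F" "(u \<otimes> a, c) \<in> G"
    using fracs_common_defined_at_multiple[OF F G] fracs_carrier[OF K t(2)] by blast
  have ut: "(u \<otimes> t, u \<otimes> a) \<in> K" using fracs_smult[OF K t(2)] u(1) by simp
  have "(u \<otimes> t, b \<oplus> c) \<in> frac_mult K (frac_add F G)"
    using frac_mult_mem[OF K frac_add_closed[OF F G] ut frac_add_mem[OF F G u(2,3)]] .
  moreover have "(u \<otimes> t, b \<oplus> c) \<in> frac_add (frac_mult K F) (frac_mult K G)"
    using frac_add_mem[OF frac_mult_closed[OF K F] frac_mult_closed[OF K G]
        frac_mult_mem[OF K F ut u(2)] frac_mult_mem[OF K G ut u(3)]] .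
  ultimately show ?thesis
    by (rule frac_eqI[OF frac_mult_closed[OF K frac_add_closed[OF F G]]
          frac_add_closed[OF frac_mult_closed[OF K F] frac_mult_closed[OF K G]]
          mult_denominator[OF u(1) t(1)]])
qed

lemma ring_frac_ring: "ring frac_ring"
proof (rule ringI)
  show "abelian_group frac_ring"
  proof (rule abelian_groupI, unfold frac_ring_simps)
    show "frac_add F G = frac_add G F" if "F \<in> fracs" "G \<in> fracs" for F G
      using frac_add_comm that .
    show "\<exists>G\<in>fracs. frac_add G F = carrier B \<times> {\<zero>}" if "F \<in> fracs" for F
      using frac_neg_closed[OF that] frac_neg_add[OF that] by blast
  qed (simp_all add: frac_add_closed zero_fracs frac_add_assoc frac_zero_add)
  show "monoid frac_ring"
    by (rule monoidI, unfold frac_ring_simps)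
      (simp_all add: frac_mult_closed one_fracs frac_mult_assoc frac_one_mult frac_mult_one)
qed (simp_all add: frac_distrib_right frac_distrib_left)

definition frac_embed :: "'a \<Rightarrow> ('a \<times> 'a) set" where
  "frac_embed b = {(x, x \<otimes> b) | x. x \<in> carrier B}"

definition frac_inv :: "'a \<Rightarrow> ('a \<times> 'a) set" where
  "frac_inv t = {(x, y). x \<in> carrier B \<and> y \<in> carrier B \<and> y \<otimes> t = x}"

lemma frac_embed_mem: "x \<in> carrier B \<Longrightarrow> (x, x \<otimes> b) \<in> frac_embed b"
  unfolding frac_embed_def by blast

lemma frac_embed_one_mem: "b \<in> carrier B \<Longrightarrow> (\<one>, b) \<in> frac_embed b"
  using frac_embed_mem[OF one_closed, of b] by simp

lemma frac_inv_one_mem: "t \<in> T \<Longrightarrow> (t, \<one>) \<in> frac_inv t"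
  unfolding frac_inv_def by simp

lemma frac_embed_iff: "(x, y) \<in> frac_embed b \<longleftrightarrow> x \<in> carrier B \<and> y = x \<otimes> b"
  unfolding frac_embed_def by blast

lemma frac_embed_fracs: assumes b: "b \<in> carrier B" shows "frac_embed b \<in> fracs"
proof (rule fracsI)
  show "lin_graph (frac_embed b)"
  proof (rule lin_graphI[OF _ _ _ _ one_denominator frac_embed_one_mem[OF b]])
    show "frac_embed b \<subseteq> carrier B \<times> carrier B" unfolding frac_embed_def using b by auto
    show "y = y'" if "(x, y) \<in> frac_embed b" "(x, y') \<in> frac_embed b" for x y y'
      using that by (simp add: frac_embed_iff)
    show "(c \<otimes> x, c \<otimes> y) \<in> frac_embed b" if "(x, y) \<in> frac_embed b" "c \<in> carrier B" for x y c
      using that b by (simp add: frac_embed_iff m_assoc)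
    show "(x \<oplus> x', y \<oplus> y') \<in> frac_embed b" if "(x, y) \<in> frac_embed b" "(x', y') \<in> frac_embed b"
      for x y x' y'
      using that b by (simp add: frac_embed_iff l_distr)
  qed
  show "saturated (frac_embed b)" unfolding saturated_def
  proof (intro ballI impI)
    fix u x y assume a: "u \<in> T" "x \<in> carrier B" "y \<in> carrier B" "(u \<otimes> x, u \<otimes> y) \<in> frac_embed b"
    then have "u \<otimes> y = u \<otimes> (x \<otimes> b)" using b by (simp add: frac_embed_iff m_assoc)
    then have "y = x \<otimes> b" using denominator_cancel_left a b by blast
    then show "(x, y) \<in> frac_embed b" using a(2) by (simp add: frac_embed_iff)
  qed
qed

lemma frac_inv_fracs: assumes t: "t \<in> T" shows "frac_inv t \<in> fracs"
proof (rule fracsI)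
  have tB: "t \<in> carrier B" using t by simp
  show "lin_graph (frac_inv t)"
  proof (rule lin_graphI[OF _ _ _ _ t frac_inv_one_mem[OF t]])
    show "frac_inv t \<subseteq> carrier B \<times> carrier B" unfolding frac_inv_def by auto
    show "y = y'" if "(x, y) \<in> frac_inv t" "(x, y') \<in> frac_inv t" for x y y'
      using that denominator_cancel_right[OF t] unfolding frac_inv_def by auto
    show "(c \<otimes> x, c \<otimes> y) \<in> frac_inv t" if "(x, y) \<in> frac_inv t" "c \<in> carrier B" for x y c
      using that tB unfolding frac_inv_def by (auto simp: m_assoc)
    show "(x \<oplus> x', y \<oplus> y') \<in> frac_inv t" if "(x, y) \<in> frac_inv t" "(x', y') \<in> frac_inv t"
      for x y x' y'
      using that tB unfolding frac_inv_def by (auto simp: l_distr)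
  qed
  show "saturated (frac_inv t)" unfolding saturated_def
  proof (intro ballI impI)
    fix u x y assume a: "u \<in> T" "x \<in> carrier B" "y \<in> carrier B" "(u \<otimes> x, u \<otimes> y) \<in> frac_inv t"
    then have "u \<otimes> (y \<otimes> t) = u \<otimes> x" unfolding frac_inv_def using tB by (simp add: m_assoc)
    then have "y \<otimes> t = x" using denominator_cancel_left a tB by simp
    then show "(x, y) \<in> frac_inv t" unfolding frac_inv_def using a by simp
  qed
qed

lemma frac_embed_hom: "frac_embed \<in> ring_hom B frac_ring"
proof (rule ring_hom_memI)
  show "frac_embed x \<in> carrier frac_ring" if "x \<in> carrier B" for x
    using frac_embed_fracs[OF that] by simp
  show "frac_embed (x \<otimes> y) = frac_embed x \<otimes>\<^bsub>frac_ring\<^esub> frac_embed y"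
    if x: "x \<in> carrier B" and y: "y \<in> carrier B" for x y
  proof -
    have "(\<one>, x \<otimes> y) \<in> frac_mult (frac_embed x) (frac_embed y)"
      using frac_mult_mem[OF frac_embed_fracs[OF x] frac_embed_fracs[OF y]
          frac_embed_one_mem[OF x] frac_embed_mem[OF x, of y]] .
    moreover have "(\<one>, x \<otimes> y) \<in> frac_embed (x \<otimes> y)"
      using frac_embed_one_mem x y by simp
    ultimately show ?thesis
      using frac_eqI[OF frac_embed_fracs frac_mult_closed[OF frac_embed_fracs[OF x] frac_embed_fracs[OF y]]
          one_denominator] x y by simp
  qed
  show "frac_embed (x \<oplus> y) = frac_embed x \<oplus>\<^bsub>frac_ring\<^esub> frac_embed y"
    if x: "x \<in> carrier B" and y: "y \<in> carrier B" for x y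
  proof -
    have "(\<one>, x \<oplus> y) \<in> frac_add (frac_embed x) (frac_embed y)"
      using frac_add_mem[OF frac_embed_fracs[OF x] frac_embed_fracs[OF y]
          frac_embed_one_mem[OF x] frac_embed_one_mem[OF y]] .
    moreover have "(\<one>, x \<oplus> y) \<in> frac_embed (x \<oplus> y)"
      using frac_embed_one_mem x y by simp
    ultimately show ?thesis
      using frac_eqI[OF frac_embed_fracs frac_add_closed[OF frac_embed_fracs[OF x] frac_embed_fracs[OF y]]
          one_denominator] x y by simp
  qed
  have "(\<one>, \<one>) \<in> frac_embed \<one>" using frac_embed_one_mem by simp
  then show "frac_embed \<one> = \<one>\<^bsub>frac_ring\<^esub>"
    using frac_eqI[OF frac_embed_fracs[OF one_closed] one_fracs one_denominator] Id_onI[OF one_closed]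
    by simp
qed

lemma frac_embed_frac_inv:
  assumes t: "t \<in> T"
  shows "frac_mult (frac_embed t) (frac_inv t) = Id_on (carrier B)"
    and "frac_mult (frac_inv t) (frac_embed t) = Id_on (carrier B)"
proof -
  have tB: "t \<in> carrier B" using t by simp
  have a: "(\<one>, t) \<in> frac_embed t" using frac_embed_one_mem[OF tB] .
  have b: "(t, \<one>) \<in> frac_inv t" using frac_inv_one_mem[OF t] .
  have "(\<one>, \<one>) \<in> frac_mult (frac_embed t) (frac_inv t)"
    using frac_mult_mem[OF frac_embed_fracs[OF tB] frac_inv_fracs[OF t] a b] .
  moreover have "(\<one>, \<one>) \<in> Id_on (carrier B)" by (rule Id_onI[OF one_closed])
  ultimately show "frac_mult (frac_embed t) (frac_inv t) = Id_on (carrier B)"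
    by (rule frac_eqI[OF frac_mult_closed[OF frac_embed_fracs[OF tB] frac_inv_fracs[OF t]] one_fracs
          one_denominator])
  have "(t, t) \<in> frac_mult (frac_inv t) (frac_embed t)"
    using frac_mult_mem[OF frac_inv_fracs[OF t] frac_embed_fracs[OF tB] b a] .
  moreover have "(t, t) \<in> Id_on (carrier B)" by (rule Id_onI[OF tB])
  ultimately show "frac_mult (frac_inv t) (frac_embed t) = Id_on (carrier B)"
    by (rule frac_eqI[OF frac_mult_closed[OF frac_inv_fracs[OF t] frac_embed_fracs[OF tB]] one_fracs t])
qed

lemma frac_embed_Units: assumes t: "t \<in> T" shows "frac_embed t \<in> Units frac_ring"
  unfolding Units_def using frac_embed_frac_inv[OF t] frac_embed_fracs[of t] frac_inv_fracs[OF t] t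
  by auto

lemma inv_frac_embed: assumes t: "t \<in> T" shows "inv\<^bsub>frac_ring\<^esub> (frac_embed t) = frac_inv t"
  using monoid.inv_char[OF ring.is_monoid[OF ring_frac_ring]] frac_embed_frac_inv[OF t]
    frac_embed_fracs[of t] frac_inv_fracs[OF t] t by simp

lemma frac_embed_mult_fracs:
  assumes F: "F \<in> fracs" and t: "t \<in> T" "(t, b) \<in> F"
  shows "frac_mult (frac_embed t) F = frac_embed b"
proof -
  have b: "b \<in> carrier B" using fracs_carrier[OF F t(2)] by simp
  have tB: "t \<in> carrier B" using t by simp
  have "(\<one>, b) \<in> frac_mult (frac_embed t) F"
    using frac_mult_mem[OF frac_embed_fracs[OF tB] F frac_embed_one_mem[OF tB] t(2)] .
  then show ?thesis
    using frac_embed_one_mem[OF b]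
    by (rule frac_eqI[OF frac_mult_closed[OF frac_embed_fracs[OF tB] F] frac_embed_fracs[OF b]
          one_denominator])
qed

lemma fracs_eq_frac_inv_mult:
  assumes F: "F \<in> fracs" and t: "t \<in> T" "(t, b) \<in> F"
  shows "F = frac_mult (frac_inv t) (frac_embed b)"
proof -
  have b: "b \<in> carrier B" using fracs_carrier[OF F t(2)] by simp
  have "(t, b) \<in> frac_mult (frac_inv t) (frac_embed b)"
    using frac_mult_mem[OF frac_inv_fracs[OF t(1)] frac_embed_fracs[OF b]
        frac_inv_one_mem[OF t(1)] frac_embed_one_mem[OF b]] .
  with t show ?thesis
    using frac_eqI[OF F frac_mult_closed[OF frac_inv_fracs[OF t(1)] frac_embed_fracs[OF b]]] by blast
qed

lemma ass_l_denominators: "ass_l T B = {\<zero>}"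
proof
  show "ass_l T B \<subseteq> {\<zero>}" unfolding ass_l_def using denominator_regular_left by blast
  show "{\<zero>} \<subseteq> ass_l T B" unfolding ass_l_def using one_denominator by force
qed

lemma left_localization_frac_ring: "left_localization B T frac_ring frac_embed"
  unfolding left_localization_def
proof (intro conjI ballI ring_frac_ring frac_embed_hom frac_embed_Units)
  fix F assume "F \<in> carrier frac_ring"
  then have F: "F \<in> fracs" by simp
  then obtain t b where t: "t \<in> T" "(t, b) \<in> F" using fracs_denominator by blast
  then have "F = inv\<^bsub>frac_ring\<^esub> (frac_embed t) \<otimes>\<^bsub>frac_ring\<^esub> frac_embed b"
    using fracs_eq_frac_inv_mult[OF F t] inv_frac_embed by simp
  then show "\<exists>t\<in>T. \<exists>b\<in>carrier B. F = inv\<^bsub>frac_ring\<^esub> (frac_embed t) \<otimes>\<^bsub>frac_ring\<^esub> frac_embed b"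
    using t fracs_carrier[OF F t(2)] by blast
next
  have "frac_embed b = \<zero>\<^bsub>frac_ring\<^esub> \<longleftrightarrow> b = \<zero>" if "b \<in> carrier B" for b
  proof
    assume "frac_embed b = \<zero>\<^bsub>frac_ring\<^esub>"
    then show "b = \<zero>" using frac_embed_one_mem[OF that] by simp
  qed (auto simp: frac_embed_def)
  then show "{b \<in> carrier B. frac_embed b = \<zero>\<^bsub>frac_ring\<^esub>} = ass_l T B"
    unfolding ass_l_denominators by auto
qed

end

section \<open>Universal property of the ring of fractions\<close>

locale regular_left_ore_lift = regular_left_ore B T + Q': ring Q'
  for B (structure) and T and Q' :: "('c, 'n) ring_scheme" +
  fixes g
  assumes g_hom: "g \<in> ring_hom B Q'"
    and g_Units: "\<And>t. t \<in> T \<Longrightarrow> g t \<in> Units Q'"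
begin

definition frac_lift :: "('a \<times> 'a) set \<Rightarrow> 'c" where
  "frac_lift F = (THE q. q \<in> carrier Q' \<and> (\<forall>(x, y)\<in>F. g x \<otimes>\<^bsub>Q'\<^esub> q = g y))"

lemma g_closed [simp]: "x \<in> carrier B \<Longrightarrow> g x \<in> carrier Q'"
  using ring_hom_closed[OF g_hom] .

lemma g_mult [simp]: "x \<in> carrier B \<Longrightarrow> y \<in> carrier B \<Longrightarrow> g (x \<otimes> y) = g x \<otimes>\<^bsub>Q'\<^esub> g y"
  using ring_hom_mult[OF g_hom] .

lemma g_add [simp]: "x \<in> carrier B \<Longrightarrow> y \<in> carrier B \<Longrightarrow> g (x \<oplus> y) = g x \<oplus>\<^bsub>Q'\<^esub> g y"
  using ring_hom_add[OF g_hom] .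

lemma g_one [simp]: "g \<one> = \<one>\<^bsub>Q'\<^esub>"
  using ring_hom_one[OF g_hom] .

lemma g_inv_closed [simp]: "t \<in> T \<Longrightarrow> inv\<^bsub>Q'\<^esub> (g t) \<in> carrier Q'"
  using g_Units by simp

lemma g_solve:
  assumes q: "q \<in> carrier Q'" and t: "t \<in> T" and "g t \<otimes>\<^bsub>Q'\<^esub> q = g b"
  shows "q = inv\<^bsub>Q'\<^esub> (g t) \<otimes>\<^bsub>Q'\<^esub> g b"
proof -
  have "inv\<^bsub>Q'\<^esub> (g t) \<otimes>\<^bsub>Q'\<^esub> g b = inv\<^bsub>Q'\<^esub> (g t) \<otimes>\<^bsub>Q'\<^esub> (g t \<otimes>\<^bsub>Q'\<^esub> q)"
    using assms(3) by simp
  also have "\<dots> = q" using q t g_Units[OF t] by (simp flip: Q'.m_assoc)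
  finally show ?thesis by simp
qed

lemma g_fraction_equation:
  assumes F: "F \<in> fracs" and t: "t \<in> T" "(t, b) \<in> F" and xy: "(x, y) \<in> F"
  shows "g x \<otimes>\<^bsub>Q'\<^esub> (inv\<^bsub>Q'\<^esub> (g t) \<otimes>\<^bsub>Q'\<^esub> g b) = g y"
proof -
  have x: "x \<in> carrier B" and y: "y \<in> carrier B" and b: "b \<in> carrier B"
    using fracs_carrier[OF F xy] fracs_carrier[OF F t(2)] by auto
  obtain u c where uc: "u \<in> T" "c \<in> carrier B" "u \<otimes> x = c \<otimes> t" using left_ore[OF x t(1)] by blast
  have "(u \<otimes> x, u \<otimes> y) \<in> F" using fracs_smult[OF F xy] uc(1) by simp
  then have uy: "u \<otimes> y = c \<otimes> b"
    using fracs_functional[OF F] fracs_smult[OF F t(2) uc(2)] uc(3) by metis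
  have "g u \<otimes>\<^bsub>Q'\<^esub> (g x \<otimes>\<^bsub>Q'\<^esub> (inv\<^bsub>Q'\<^esub> (g t) \<otimes>\<^bsub>Q'\<^esub> g b))
      = g (u \<otimes> x) \<otimes>\<^bsub>Q'\<^esub> (inv\<^bsub>Q'\<^esub> (g t) \<otimes>\<^bsub>Q'\<^esub> g b)"
    using uc(1) x b t(1) by (simp add: Q'.m_assoc)
  also have "\<dots> = g (c \<otimes> t) \<otimes>\<^bsub>Q'\<^esub> (inv\<^bsub>Q'\<^esub> (g t) \<otimes>\<^bsub>Q'\<^esub> g b)"
    by (simp only: uc(3))
  also have "\<dots> = g (c \<otimes> b)"
    using uc(2) b t(1) g_Units[OF t(1)] by (simp add: Q'.m_assoc flip: Q'.m_assoc[of "g t"])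
  also have "\<dots> = g u \<otimes>\<^bsub>Q'\<^esub> g y" using uy uc(1) y by (simp flip: g_mult)
  finally show ?thesis
    using g_Units[OF uc(1)] x y b t(1) by simp
qed

lemma frac_lift_eq:
  assumes F: "F \<in> fracs" and t: "t \<in> T" "(t, b) \<in> F"
  shows "frac_lift F = inv\<^bsub>Q'\<^esub> (g t) \<otimes>\<^bsub>Q'\<^esub> g b"
  unfolding frac_lift_def
proof (rule the_equality)
  have b: "b \<in> carrier B" using fracs_carrier[OF F t(2)] by simp
  show "inv\<^bsub>Q'\<^esub> (g t) \<otimes>\<^bsub>Q'\<^esub> g b \<in> carrier Q' \<and>
      (\<forall>(x, y)\<in>F. g x \<otimes>\<^bsub>Q'\<^esub> (inv\<^bsub>Q'\<^esub> (g t) \<otimes>\<^bsub>Q'\<^esub> g b) = g y)"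
    using g_fraction_equation[OF F t] g_inv_closed[OF t(1)] g_closed[OF b] by auto
  show "q = inv\<^bsub>Q'\<^esub> (g t) \<otimes>\<^bsub>Q'\<^esub> g b"
    if "q \<in> carrier Q' \<and> (\<forall>(x, y)\<in>F. g x \<otimes>\<^bsub>Q'\<^esub> q = g y)" for q
    using that t g_solve[OF _ t(1)] by blast
qed

lemma frac_lift_equation:
  assumes F: "F \<in> fracs" and xy: "(x, y) \<in> F"
  shows "g x \<otimes>\<^bsub>Q'\<^esub> frac_lift F = g y"
proof -
  obtain t b where "t \<in> T" "(t, b) \<in> F" using fracs_denominator[OF F] by blast
  then show ?thesis using frac_lift_eq[OF F] g_fraction_equation[OF F _ _ xy] by simp
qed

lemma frac_lift_closed: "F \<in> fracs \<Longrightarrow> frac_lift F \<in> carrier Q'"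
  using fracs_denominator frac_lift_eq fracs_carrier by (metis Q'.m_closed g_inv_closed g_closed)

lemma frac_lift_hom: "frac_lift \<in> ring_hom frac_ring Q'"
proof (rule ring_hom_memI)
  show "frac_lift F \<in> carrier Q'" if "F \<in> carrier frac_ring" for F
    using frac_lift_closed that by simp
  show "frac_lift (F \<otimes>\<^bsub>frac_ring\<^esub> G) = frac_lift F \<otimes>\<^bsub>Q'\<^esub> frac_lift G"
    if "F \<in> carrier frac_ring" "G \<in> carrier frac_ring" for F G
  proof -
    have F: "F \<in> fracs" and G: "G \<in> fracs" using that by simp_all
    obtain t a c where t: "t \<in> T" "(t, a) \<in> F" "(a, c) \<in> G" using fracs_chain[OF F G] by blast
    have a: "a \<in> carrier B" using fracs_carrier[OF F t(2)] by simp
    have "frac_lift F \<otimes>\<^bsub>Q'\<^esub> frac_lift G = inv\<^bsub>Q'\<^esub> (g t) \<otimes>\<^bsub>Q'\<^esub> (g a \<otimes>\<^bsub>Q'\<^esub> frac_lift G)"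
      using frac_lift_eq[OF F t(1,2)] t(1) a frac_lift_closed[OF G] by (simp add: Q'.m_assoc)
    also have "\<dots> = frac_lift (frac_mult F G)"
      using frac_lift_equation[OF G t(3)] frac_lift_eq[OF frac_mult_closed[OF F G] t(1)
          frac_mult_mem[OF F G t(2,3)]] by simp
    finally show ?thesis by simp
  qed
  show "frac_lift (F \<oplus>\<^bsub>frac_ring\<^esub> G) = frac_lift F \<oplus>\<^bsub>Q'\<^esub> frac_lift G"
    if "F \<in> carrier frac_ring" "G \<in> carrier frac_ring" for F G
  proof -
    have F: "F \<in> fracs" and G: "G \<in> fracs" using that by simp_all
    obtain t a b where t: "t \<in> T" "(t, a) \<in> F" "(t, b) \<in> G"
      using fracs_common_denominator[OF F G] by blast
    have ab: "a \<in> carrier B" "b \<in> carrier B"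
      using fracs_carrier[OF F t(2)] fracs_carrier[OF G t(3)] by auto
    show ?thesis
      using frac_lift_eq[OF frac_add_closed[OF F G] t(1) frac_add_mem[OF F G t(2,3)]]
        frac_lift_eq[OF F t(1,2)] frac_lift_eq[OF G t(1,3)] ab t(1)
      by (simp add: Q'.r_distr)
  qed
  show "frac_lift \<one>\<^bsub>frac_ring\<^esub> = \<one>\<^bsub>Q'\<^esub>"
    using frac_lift_eq[OF one_fracs one_denominator Id_onI[OF one_closed]] by simp
qed

lemma frac_lift_frac_embed: "b \<in> carrier B \<Longrightarrow> frac_lift (frac_embed b) = g b"
  using frac_lift_eq[OF frac_embed_fracs one_denominator frac_embed_one_mem] by simp

lemma frac_lift_unique:
  assumes h: "h \<in> ring_hom frac_ring Q'" and hg: "\<And>b. b \<in> carrier B \<Longrightarrow> h (frac_embed b) = g b"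
    and F: "F \<in> fracs"
  shows "h F = frac_lift F"
proof -
  obtain t b where t: "t \<in> T" "(t, b) \<in> F" using fracs_denominator[OF F] by blast
  have tB: "t \<in> carrier B" and b: "b \<in> carrier B" using t fracs_carrier[OF F t(2)] by auto
  have "g t \<otimes>\<^bsub>Q'\<^esub> h F = h (frac_mult (frac_embed t) F)"
    using ring_hom_mult[OF h, of "frac_embed t" F] frac_embed_fracs[OF tB] F hg[OF tB] by simp
  also have "\<dots> = g b" using frac_embed_mult_fracs[OF F t] hg[OF b] by simp
  finally have "h F = inv\<^bsub>Q'\<^esub> (g t) \<otimes>\<^bsub>Q'\<^esub> g b"
    using g_solve ring_hom_closed[OF h] F t(1) b by simp
  then show ?thesis using frac_lift_eq[OF F t] by simp
qed

end

section \<open>The ideal \<open>\<pp>(S)\<close>\<close>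

lemma (in monoid) Units_r_cancel [simp]:
  assumes u: "u \<in> Units G" and y: "y \<in> carrier G" and z: "z \<in> carrier G"
  shows "y \<otimes> u = z \<otimes> u \<longleftrightarrow> y = z"
proof
  assume "y \<otimes> u = z \<otimes> u"
  then have "(y \<otimes> u) \<otimes> inv u = (z \<otimes> u) \<otimes> inv u" by simp
  then show "y = z" using u y z by (simp add: m_assoc Units_closed)
qed simp

lemma (in ring) ideal_closedI:
  assumes "J \<subseteq> carrier R" "\<zero> \<in> J" "\<And>a b. a \<in> J \<Longrightarrow> b \<in> J \<Longrightarrow> a \<oplus> b \<in> J"
    "\<And>a. a \<in> J \<Longrightarrow> \<ominus> a \<in> J" "\<And>a x. a \<in> J \<Longrightarrow> x \<in> carrier R \<Longrightarrow> x \<otimes> a \<in> J"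
    "\<And>a x. a \<in> J \<Longrightarrow> x \<in> carrier R \<Longrightarrow> a \<otimes> x \<in> J"
  shows "ideal J R"
proof (rule idealI[OF ring_axioms])
  show "subgroup J (add_monoid R)"
    by (rule add.subgroupI) (use assms in \<open>auto simp: a_inv_def[symmetric]\<close>)
qed (use assms in auto)

locale ore_ring = ring R for R (structure) +
  fixes S assumes ore: "ore_set R S"
begin

lemma S_closed: "S \<subseteq> carrier R" and one_S: "\<one> \<in> S" and zero_notin_S: "\<zero> \<notin> S"
  and mult_S: "s \<in> S \<Longrightarrow> t \<in> S \<Longrightarrow> s \<otimes> t \<in> S"
  and left_ore: "r \<in> carrier R \<Longrightarrow> s \<in> S \<Longrightarrow> \<exists>s'\<in>S. \<exists>r'\<in>carrier R. s' \<otimes> r = r' \<otimes> s"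
  and right_ore: "r \<in> carrier R \<Longrightarrow> s \<in> S \<Longrightarrow> \<exists>s'\<in>S. \<exists>r'\<in>carrier R. r \<otimes> s' = s \<otimes> r'"
  using ore unfolding ore_set_def by auto

lemma S_carrier [simp]: "s \<in> S \<Longrightarrow> s \<in> carrier R"
  using S_closed by auto

text \<open>The preimages in \<open>R\<close> of \<open>ass_l(\<pi>(S), R/I)\<close> and \<open>ass_r(\<pi>(S), R/I)\<close>
  (\<open>ass_l_quotient\<close>, \<open>ass_r_quotient\<close>); working with them in \<open>R\<close> avoids iterated
  quotient rings.\<close>

definition ass_l_mod :: "'a set \<Rightarrow> 'a set" where
  "ass_l_mod I = {a \<in> carrier R. \<exists>s\<in>S. s \<otimes> a \<in> I}"

definition ass_r_mod :: "'a set \<Rightarrow> 'a set" where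
  "ass_r_mod I = {a \<in> carrier R. \<exists>s\<in>S. a \<otimes> s \<in> I}"

definition p_step :: "'a set \<Rightarrow> 'a set" where
  "p_step I = ass_l_mod I <+>\<^bsub>R\<^esub> ass_r_mod I"

context
  fixes I assumes I: "ideal I R"
begin

interpretation I: ideal I R by (fact I)

lemma ass_l_mod_add:
  assumes "a \<in> ass_l_mod I" "b \<in> ass_l_mod I" shows "a \<oplus> b \<in> ass_l_mod I"
proof -
  obtain s s' where s: "s \<in> S" "s \<otimes> a \<in> I" "s' \<in> S" "s' \<otimes> b \<in> I"
    and ab: "a \<in> carrier R" "b \<in> carrier R"
    using assms unfolding ass_l_mod_def by auto
  obtain u c where uc: "u \<in> S" "c \<in> carrier R" "u \<otimes> s = c \<otimes> s'"
    using left_ore[of s s'] s by auto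
  have "(u \<otimes> s) \<otimes> (a \<oplus> b) = u \<otimes> (s \<otimes> a) \<oplus> c \<otimes> (s' \<otimes> b)"
    using uc s ab by (simp add: r_distr m_assoc[symmetric])
  also have "\<dots> \<in> I" using s uc by (simp add: I.I_l_closed)
  finally show ?thesis unfolding ass_l_mod_def using mult_S uc s ab by blast
qed

lemma ass_l_mod_mult_left:
  assumes a: "a \<in> ass_l_mod I" and x: "x \<in> carrier R" shows "x \<otimes> a \<in> ass_l_mod I"
proof -
  obtain s where s: "s \<in> S" "s \<otimes> a \<in> I" and a: "a \<in> carrier R"
    using assms unfolding ass_l_mod_def by auto
  obtain u c where uc: "u \<in> S" "c \<in> carrier R" "u \<otimes> x = c \<otimes> s" using left_ore[OF x s(1)] by blast
  have "u \<otimes> (x \<otimes> a) = c \<otimes> (s \<otimes> a)" using uc a x s(1) by (simp flip: m_assoc)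
  then have "u \<otimes> (x \<otimes> a) \<in> I" using I.I_l_closed[OF s(2) uc(2)] by simp
  then show ?thesis unfolding ass_l_mod_def using uc(1) a x by blast
qed

lemma ideal_ass_l_mod: "ideal (ass_l_mod I) R"
proof (rule ideal_closedI)
  show "ass_l_mod I \<subseteq> carrier R" unfolding ass_l_mod_def by auto
  show "\<zero> \<in> ass_l_mod I" unfolding ass_l_mod_def using one_S by force
  show "\<ominus> a \<in> ass_l_mod I" if "a \<in> ass_l_mod I" for a
    using ass_l_mod_mult_left[OF that, of "\<ominus> \<one>"] that unfolding ass_l_mod_def
    by (simp add: l_minus)
  show "a \<otimes> x \<in> ass_l_mod I" if "a \<in> ass_l_mod I" "x \<in> carrier R" for a x
    using that I.I_r_closed unfolding ass_l_mod_def by (auto simp flip: m_assoc)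
qed (fact ass_l_mod_add ass_l_mod_mult_left)+

lemma ass_r_mod_add:
  assumes "a \<in> ass_r_mod I" "b \<in> ass_r_mod I" shows "a \<oplus> b \<in> ass_r_mod I"
proof -
  obtain s s' where s: "s \<in> S" "a \<otimes> s \<in> I" "s' \<in> S" "b \<otimes> s' \<in> I"
    and ab: "a \<in> carrier R" "b \<in> carrier R"
    using assms unfolding ass_r_mod_def by auto
  obtain u c where uc: "u \<in> S" "c \<in> carrier R" "s \<otimes> u = s' \<otimes> c"
    using right_ore[of s s'] s by auto
  have "(a \<oplus> b) \<otimes> (s \<otimes> u) = (a \<otimes> s) \<otimes> u \<oplus> (b \<otimes> s') \<otimes> c"
    using uc s ab by (simp add: l_distr m_assoc)
  also have "\<dots> \<in> I" using s uc by (simp add: I.I_r_closed)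
  finally show ?thesis unfolding ass_r_mod_def using mult_S uc s ab by blast
qed

lemma ass_r_mod_mult_right:
  assumes a: "a \<in> ass_r_mod I" and x: "x \<in> carrier R" shows "a \<otimes> x \<in> ass_r_mod I"
proof -
  obtain s where s: "s \<in> S" "a \<otimes> s \<in> I" and a: "a \<in> carrier R"
    using assms unfolding ass_r_mod_def by auto
  obtain u c where uc: "u \<in> S" "c \<in> carrier R" "x \<otimes> u = s \<otimes> c" using right_ore[OF x s(1)] by blast
  have "(a \<otimes> x) \<otimes> u = (a \<otimes> s) \<otimes> c" using uc a x s(1) by (simp add: m_assoc)
  then have "(a \<otimes> x) \<otimes> u \<in> I" using I.I_r_closed[OF s(2) uc(2)] by simp
  then show ?thesis unfolding ass_r_mod_def using uc(1) a x by blast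
qed

lemma ideal_ass_r_mod: "ideal (ass_r_mod I) R"
proof (rule ideal_closedI)
  show "ass_r_mod I \<subseteq> carrier R" unfolding ass_r_mod_def by auto
  show "\<zero> \<in> ass_r_mod I" unfolding ass_r_mod_def using one_S by force
  show "\<ominus> a \<in> ass_r_mod I" if "a \<in> ass_r_mod I" for a
    using ass_r_mod_mult_right[OF that, of "\<ominus> \<one>"] that unfolding ass_r_mod_def
    by (simp add: r_minus)
  show "x \<otimes> a \<in> ass_r_mod I" if "a \<in> ass_r_mod I" "x \<in> carrier R" for a x
    using that I.I_l_closed unfolding ass_r_mod_def by (auto simp: m_assoc)
qed (fact ass_r_mod_add ass_r_mod_mult_right)+

lemma ideal_p_step: "ideal (p_step I) R"
  unfolding p_step_def by (rule add_ideals[OF ideal_ass_l_mod ideal_ass_r_mod])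

lemma subset_p_step: "I \<subseteq> p_step I"
proof
  fix x assume x: "x \<in> I"
  then have "x \<in> carrier R" "x \<in> ass_l_mod I" "\<zero> \<in> ass_r_mod I"
    unfolding ass_l_mod_def ass_r_mod_def using one_S by force+
  then show "x \<in> p_step I" unfolding p_step_def set_add_def' by force
qed

end

lemma p_step_memE:
  assumes "x \<in> p_step I"
  obtains a b s t where "x = a \<oplus> b" "a \<in> carrier R" "b \<in> carrier R" "s \<in> S" "t \<in> S"
    "s \<otimes> a \<in> I" "b \<otimes> t \<in> I"
  using assms unfolding p_step_def set_add_def' ass_l_mod_def ass_r_mod_def by blast

lemma p_one_eq_p_step: "p_one R S = p_step {\<zero>}"
  unfolding p_one_def p_step_def ass_l_mod_def ass_r_mod_def ass_l_def ass_r_def by simp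

lemma canon_eq: "canon R I = (+>) I"
  unfolding canon_def by (rule ext) simp

context
  fixes I assumes I: "ideal I R"
begin

interpretation I: ideal I R by (fact I)

lemma ass_l_quotient: "ass_l (canon R I ` S) (R Quot I) = (+>) I ` ass_l_mod I"
proof
  show "ass_l (canon R I ` S) (R Quot I) \<subseteq> (+>) I ` ass_l_mod I"
  proof
    fix Z assume "Z \<in> ass_l (canon R I ` S) (R Quot I)"
    then obtain a s where a: "a \<in> carrier R" "Z = I +> a" and s: "s \<in> S"
      and "(I +> s) \<otimes>\<^bsub>R Quot I\<^esub> (I +> a) = I"
      unfolding ass_l_def canon_def by (auto simp: FactRing_def A_RCOSETS_def')
    then have "I +> (s \<otimes> a) = I" using I.rcoset_mult_add[of s a] by (simp add: FactRing_def)
    then have "s \<otimes> a \<in> I" using I.rcos_const_imp_mem a(1) s by simp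
    then show "Z \<in> (+>) I ` ass_l_mod I" unfolding ass_l_mod_def using a s by blast
  qed
  show "(+>) I ` ass_l_mod I \<subseteq> ass_l (canon R I ` S) (R Quot I)"
  proof
    fix Z assume "Z \<in> (+>) I ` ass_l_mod I"
    then obtain a s where a: "a \<in> carrier R" "Z = I +> a" "s \<in> S" "s \<otimes> a \<in> I"
      unfolding ass_l_mod_def by blast
    have "(I +> s) \<otimes>\<^bsub>R Quot I\<^esub> Z = \<zero>\<^bsub>R Quot I\<^esub>"
      using I.rcoset_mult_add[of s a] I.a_rcos_const[OF a(4)] a by (simp add: FactRing_def)
    moreover have "Z \<in> carrier (R Quot I)"
      using a_rcosetsI[OF I.a_subset a(1)] a(2) by (simp add: FactRing_def)
    ultimately show "Z \<in> ass_l (canon R I ` S) (R Quot I)"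
      unfolding ass_l_def canon_eq using a(3) by blast
  qed
qed

lemma ass_r_quotient: "ass_r (canon R I ` S) (R Quot I) = (+>) I ` ass_r_mod I"
proof
  show "ass_r (canon R I ` S) (R Quot I) \<subseteq> (+>) I ` ass_r_mod I"
  proof
    fix Z assume "Z \<in> ass_r (canon R I ` S) (R Quot I)"
    then obtain a s where a: "a \<in> carrier R" "Z = I +> a" and s: "s \<in> S"
      and "(I +> a) \<otimes>\<^bsub>R Quot I\<^esub> (I +> s) = I"
      unfolding ass_r_def canon_def by (auto simp: FactRing_def A_RCOSETS_def')
    then have "I +> (a \<otimes> s) = I" using I.rcoset_mult_add[of a s] by (simp add: FactRing_def)
    then have "a \<otimes> s \<in> I" using I.rcos_const_imp_mem a(1) s by simp
    then show "Z \<in> (+>) I ` ass_r_mod I" unfolding ass_r_mod_def using a s by blast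
  qed
  show "(+>) I ` ass_r_mod I \<subseteq> ass_r (canon R I ` S) (R Quot I)"
  proof
    fix Z assume "Z \<in> (+>) I ` ass_r_mod I"
    then obtain a s where a: "a \<in> carrier R" "Z = I +> a" "s \<in> S" "a \<otimes> s \<in> I"
      unfolding ass_r_mod_def by blast
    have "Z \<otimes>\<^bsub>R Quot I\<^esub> (I +> s) = \<zero>\<^bsub>R Quot I\<^esub>"
      using I.rcoset_mult_add[of a s] I.a_rcos_const[OF a(4)] a by (simp add: FactRing_def)
    moreover have "Z \<in> carrier (R Quot I)"
      using a_rcosetsI[OF I.a_subset a(1)] a(2) by (simp add: FactRing_def)
    ultimately show "Z \<in> ass_r (canon R I ` S) (R Quot I)"
      unfolding ass_r_def canon_eq using a(3) by blast
  qed
qed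

lemma p_succ_eq_p_step: "p_succ R S I = p_step I"
proof -
  have carrier_l: "\<And>a. a \<in> ass_l_mod I \<Longrightarrow> a \<in> carrier R"
    and carrier_r: "\<And>b. b \<in> ass_r_mod I \<Longrightarrow> b \<in> carrier R"
    unfolding ass_l_mod_def ass_r_mod_def by auto
  have "ass_l (canon R I ` S) (R Quot I) <+>\<^bsub>R Quot I\<^esub> ass_r (canon R I ` S) (R Quot I)
      = (\<Union>a\<in>ass_l_mod I. \<Union>b\<in>ass_r_mod I. {I +> (a \<oplus> b)})"
    unfolding ass_l_quotient ass_r_quotient set_add_def'
    by (simp add: FactRing_def I.a_rcos_sum carrier_l carrier_r)
  also have "\<dots> = (+>) I ` p_step I"
    unfolding p_step_def set_add_def' by blast
  finally have succ: "p_succ R S I = {x \<in> carrier R. I +> x \<in> (+>) I ` p_step I}"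
    unfolding p_succ_def canon_def by simp
  moreover have "x \<in> p_step I" if x: "x \<in> carrier R" and y: "y \<in> p_step I" "I +> x = I +> y" for x y
  proof -
    interpret J: ideal "p_step I" R by (rule ideal_p_step[OF I])
    have "x \<in> I +> y" using I.a_rcos_self[OF x] y(2) by simp
    then obtain i where "i \<in> I" "x = i \<oplus> y" unfolding a_r_coset_def' by blast
    then show ?thesis using subset_p_step[OF I] J.a_closed y(1) by blast
  qed
  moreover have "p_step I \<subseteq> carrier R" using ideal.Icarr[OF ideal_p_step[OF I]] by blast
  ultimately show ?thesis unfolding succ by blast
qed

end

text \<open>\<open>p_step\<close> is inflationary only on ideals, so the stages are compared inside the tower of
  the inflationary map \<open>J \<mapsto> J \<union> p_step J\<close>, which agrees with \<open>p_step\<close> on ideals.\<close>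

definition p_tower :: "'a set set" where
  "p_tower = tower (p_step {\<zero>}) (\<lambda>J. J \<union> p_step J)"

lemma p_tower_linear: "J \<in> p_tower \<Longrightarrow> K \<in> p_tower \<Longrightarrow> J \<subseteq> K \<or> K \<subseteq> J"
  unfolding p_tower_def by (rule tower_linear[where g = "\<lambda>J. J \<union> p_step J"]) blast+

lemma ideal_p_tower: "J \<in> p_tower \<Longrightarrow> ideal J R"
  unfolding p_tower_def
proof (induction rule: tower.induct)
  case base
  show ?case by (rule ideal_p_step[OF zeroideal])
next
  case (step J)
  then show ?case using ideal_p_step subset_p_step by (simp add: Un_absorb1)
next
  case (Union C)
  then have "subset.chain {I. ideal I R} C"
    using p_tower_linear unfolding subset_chain_def p_tower_def by blast
  then have "ideal (if C = {} then {\<zero>} else \<Union>C) R" by (rule chain_Union_is_ideal)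
  with Union.hyps show ?case by (simp split: if_splits)
qed

lemma p_stages_subset_p_tower: "J \<in> p_stages R S \<Longrightarrow> J \<in> p_tower"
proof (induction rule: p_stages.induct)
  case base
  show ?case unfolding p_one_eq_p_step p_tower_def by (rule tower.base)
next
  case (succ I)
  from succ.IH have "ideal I R" by (rule ideal_p_tower)
  then have "p_succ R S I = I \<union> p_step I" using p_succ_eq_p_step subset_p_step by blast
  then show ?case using succ.IH tower.step unfolding p_tower_def by metis
next
  case (lim C)
  then show ?case unfolding p_tower_def by (blast intro: tower.Union)
qed

lemma ideal_p_stage: "J \<in> p_stages R S \<Longrightarrow> ideal J R"
  using p_stages_subset_p_tower ideal_p_tower by blast

lemma ideal_p_of: "ideal (p_of R S) R"
proof -
  have "subset.chain {I. ideal I R} (p_stages R S)"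
    unfolding subset_chain_def using ideal_p_stage p_stages_subset_p_tower p_tower_linear by blast
  then have "ideal (if p_stages R S = {} then {\<zero>} else \<Union>(p_stages R S)) R"
    by (rule chain_Union_is_ideal)
  moreover have "p_stages R S \<noteq> {}" using p_stages.base by blast
  ultimately show ?thesis unfolding p_of_def by simp
qed

lemma p_step_disjoint:
  assumes I: "ideal I R" and disjoint: "S \<inter> I = {}" shows "S \<inter> p_step I = {}"
proof (rule ccontr)
  interpret I: ideal I R by (fact I)
  assume "S \<inter> p_step I \<noteq> {}"
  then obtain u where u: "u \<in> S" "u \<in> p_step I" by blast
  then obtain a b s t where ab: "u = a \<oplus> b" "a \<in> carrier R" "b \<in> carrier R" "s \<in> S" "t \<in> S"
    "s \<otimes> a \<in> I" "b \<otimes> t \<in> I"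
    by (elim p_step_memE)
  have "(s \<otimes> u) \<otimes> t = (s \<otimes> a) \<otimes> t \<oplus> s \<otimes> (b \<otimes> t)"
    using ab by (simp add: r_distr l_distr m_assoc)
  also have "\<dots> \<in> I" using ab I.I_r_closed I.I_l_closed by simp
  finally show False using disjoint mult_S u(1) ab(4,5) by blast
qed

lemma p_stages_disjoint: "J \<in> p_stages R S \<Longrightarrow> S \<inter> J = {}"
proof (induction rule: p_stages.induct)
  case base
  show ?case using p_step_disjoint[OF zeroideal] zero_notin_S unfolding p_one_eq_p_step by blast
next
  case (succ I)
  then show ?case
    using p_step_disjoint[OF ideal_p_stage] p_succ_eq_p_step[OF ideal_p_stage] by simp
next
  case (lim C)
  then show ?case by blast
qed

lemma p_of_disjoint: "S \<inter> p_of R S = {}"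
  unfolding p_of_def using p_stages_disjoint by blast

lemma p_of_succ_closed:
  assumes "J \<in> p_stages R S" "x \<in> p_step J" shows "x \<in> p_of R S"
  using assms p_stages.succ[OF assms(1)] p_succ_eq_p_step[OF ideal_p_stage[OF assms(1)]]
  unfolding p_of_def by blast

lemma p_of_cancel_left:
  assumes "s \<in> S" "r \<in> carrier R" "s \<otimes> r \<in> p_of R S" shows "r \<in> p_of R S"
proof -
  obtain J where J: "J \<in> p_stages R S" "s \<otimes> r \<in> J" using assms(3) unfolding p_of_def by blast
  then have "r \<in> ass_l_mod J" "\<zero> \<in> ass_r_mod J"
    unfolding ass_l_mod_def ass_r_mod_def
    using assms one_S additive_subgroup.zero_closed[OF ideal.axioms(1)[OF ideal_p_stage]] by force+
  then have "r \<oplus> \<zero> \<in> p_step J" unfolding p_step_def set_add_def' by blast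
  then show ?thesis using p_of_succ_closed[OF J(1)] assms(2) by simp
qed

lemma p_of_cancel_right:
  assumes "s \<in> S" "r \<in> carrier R" "r \<otimes> s \<in> p_of R S" shows "r \<in> p_of R S"
proof -
  obtain J where J: "J \<in> p_stages R S" "r \<otimes> s \<in> J" using assms(3) unfolding p_of_def by blast
  then have "\<zero> \<in> ass_l_mod J" "r \<in> ass_r_mod J"
    unfolding ass_l_mod_def ass_r_mod_def
    using assms one_S additive_subgroup.zero_closed[OF ideal.axioms(1)[OF ideal_p_stage]] by force+
  then have "\<zero> \<oplus> r \<in> p_step J" unfolding p_step_def set_add_def' by blast
  then show ?thesis using p_of_succ_closed[OF J(1)] assms(2) by simp
qed

context
  fixes Q' :: "('c, 'n) ring_scheme" and f
  assumes inverts: "inverts R S Q' f"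
begin

interpretation Q': ring Q' using inverts unfolding inverts_def by blast

lemma inverts_hom: "f \<in> ring_hom R Q'" and inverts_Units: "s \<in> S \<Longrightarrow> f s \<in> Units Q'"
  using inverts unfolding inverts_def by blast+

lemma p_step_kernel:
  assumes I: "\<And>x. x \<in> I \<Longrightarrow> f x = \<zero>\<^bsub>Q'\<^esub>" and x: "x \<in> p_step I"
  shows "f x = \<zero>\<^bsub>Q'\<^esub>"
proof -
  obtain a b s t where ab: "x = a \<oplus> b" "a \<in> carrier R" "b \<in> carrier R" "s \<in> S" "t \<in> S"
    "s \<otimes> a \<in> I" "b \<otimes> t \<in> I"
    using x by (elim p_step_memE)
  have "f s \<otimes>\<^bsub>Q'\<^esub> f a = f s \<otimes>\<^bsub>Q'\<^esub> \<zero>\<^bsub>Q'\<^esub>"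
    using I[OF ab(6)] ring_hom_mult[OF inverts_hom, of s a]
      Q'.r_null[OF Q'.Units_closed[OF inverts_Units[OF ab(4)]]] ab(2,4) by simp
  then have "f a = \<zero>\<^bsub>Q'\<^esub>"
    using inverts_Units[OF ab(4)] ring_hom_closed[OF inverts_hom ab(2)] by simp
  moreover have "f b \<otimes>\<^bsub>Q'\<^esub> f t = \<zero>\<^bsub>Q'\<^esub> \<otimes>\<^bsub>Q'\<^esub> f t"
    using I[OF ab(7)] ring_hom_mult[OF inverts_hom, of b t]
      Q'.l_null[OF Q'.Units_closed[OF inverts_Units[OF ab(5)]]] ab(3,5) by simp
  then have "f b = \<zero>\<^bsub>Q'\<^esub>"
    using Q'.Units_r_cancel[OF inverts_Units[OF ab(5)] ring_hom_closed[OF inverts_hom ab(3)]] by simp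
  ultimately show ?thesis using ab(1-3) ring_hom_add[OF inverts_hom] by simp
qed

lemma p_of_kernel: "x \<in> p_of R S \<Longrightarrow> f x = \<zero>\<^bsub>Q'\<^esub>"
proof -
  have "\<forall>x\<in>J. f x = \<zero>\<^bsub>Q'\<^esub>" if "J \<in> p_stages R S" for J
    using that
  proof (induction rule: p_stages.induct)
    case base
    show ?case unfolding p_one_eq_p_step
      using p_step_kernel ring_hom_zero[OF inverts_hom ring_axioms Q'.ring_axioms] by blast
  next
    case (succ I)
    then show ?case unfolding p_succ_eq_p_step[OF ideal_p_stage[OF succ.hyps]]
      using p_step_kernel by blast
  next
    case (lim C)
    then show ?case by blast
  qed
  then show "x \<in> p_of R S \<Longrightarrow> f x = \<zero>\<^bsub>Q'\<^esub>" unfolding p_of_def by blast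
qed

end

end

section \<open>The ring of fractions of \<open>R/\<pp>(S)\<close>\<close>

lemma (in ideal) quotient_lift:
  assumes Q': "ring Q'" and f: "f \<in> ring_hom R Q'" and kernel: "\<And>x. x \<in> I \<Longrightarrow> f x = \<zero>\<^bsub>Q'\<^esub>"
  shows "(\<lambda>Y. the_elem (f ` Y)) \<in> ring_hom (R Quot I) Q'"
    and "\<And>x. x \<in> carrier R \<Longrightarrow> the_elem (f ` (I +> x)) = f x"
proof -
  interpret Q': ring Q' by (fact Q')
  have image: "f ` (I +> x) = {f x}" if x: "x \<in> carrier R" for x
  proof -
    have "f (i \<oplus> x) = f x" if i: "i \<in> I" for i
    proof -
      have "f (i \<oplus> x) = f i \<oplus>\<^bsub>Q'\<^esub> f x" by (rule ring_hom_add[OF f Icarr[OF i] x])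
      then show ?thesis using kernel[OF i] ring_hom_closed[OF f x] by simp
    qed
    then have "f ` (I +> x) = (\<lambda>i. f x) ` I" unfolding a_r_coset_def' by (auto simp: image_iff)
    moreover have "I \<noteq> {}"
      using additive_subgroup.zero_closed[OF ideal.axioms(1)[OF ideal_axioms]] by blast
    ultimately show ?thesis by (simp add: image_constant_conv)
  qed
  then show lift: "\<And>x. x \<in> carrier R \<Longrightarrow> the_elem (f ` (I +> x)) = f x" by simp
  have quotient_elem: "\<exists>x\<in>carrier R. Z = I +> x" if "Z \<in> carrier (R Quot I)" for Z
    using that by (simp add: FactRing_def A_RCOSETS_def')
  show "(\<lambda>Y. the_elem (f ` Y)) \<in> ring_hom (R Quot I) Q'"
  proof (rule ring_hom_memI)
    show "the_elem (f ` Z) \<in> carrier Q'" if "Z \<in> carrier (R Quot I)" for Z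
      using quotient_elem[OF that] lift ring_hom_closed[OF f] by force
    show "the_elem (f ` (Z \<otimes>\<^bsub>R Quot I\<^esub> Y)) = the_elem (f ` Z) \<otimes>\<^bsub>Q'\<^esub> the_elem (f ` Y)"
      and "the_elem (f ` (Z \<oplus>\<^bsub>R Quot I\<^esub> Y)) = the_elem (f ` Z) \<oplus>\<^bsub>Q'\<^esub> the_elem (f ` Y)"
      if "Z \<in> carrier (R Quot I)" "Y \<in> carrier (R Quot I)" for Z Y
      using quotient_elem[OF that(1)] quotient_elem[OF that(2)] lift f
        rcoset_mult_add a_rcos_sum
      by (auto simp: FactRing_def ring_hom_mult ring_hom_add)
    show "the_elem (f ` \<one>\<^bsub>R Quot I\<^esub>) = \<one>\<^bsub>Q'\<^esub>"
      using lift[OF one_closed] ring_hom_one[OF f] by (simp add: FactRing_def)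
  qed
qed

context ore_ring
begin

lemma ring_quotient: "ring (R Quot p_of R S)"
  by (rule ideal.quotient_is_ring[OF ideal_p_of])

lemma canon_hom: "canon R (p_of R S) \<in> ring_hom R (R Quot p_of R S)"
  unfolding canon_eq by (rule ideal.rcos_ring_hom[OF ideal_p_of])

lemma canon_closed: "x \<in> carrier R \<Longrightarrow> canon R (p_of R S) x \<in> carrier (R Quot p_of R S)"
  using ring_hom_closed[OF canon_hom] .

lemma canon_mult:
  "x \<in> carrier R \<Longrightarrow> y \<in> carrier R \<Longrightarrow>
    canon R (p_of R S) (x \<otimes> y) = canon R (p_of R S) x \<otimes>\<^bsub>R Quot p_of R S\<^esub> canon R (p_of R S) y"
  using ring_hom_mult[OF canon_hom] .

lemma canon_surj: "Z \<in> carrier (R Quot p_of R S) \<Longrightarrow> \<exists>x\<in>carrier R. Z = canon R (p_of R S) x"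
  unfolding canon_def by (simp add: FactRing_def A_RCOSETS_def')

lemma canon_eq_zero_iff:
  assumes "x \<in> carrier R"
  shows "canon R (p_of R S) x = \<zero>\<^bsub>R Quot p_of R S\<^esub> \<longleftrightarrow> x \<in> p_of R S"
proof -
  interpret P: ideal "p_of R S" R by (rule ideal_p_of)
  show ?thesis
    using P.rcos_const_imp_mem[OF assms] P.a_rcos_const unfolding canon_def
    by (auto simp: FactRing_def)
qed

lemma canon_S_regular_left:
  assumes s: "s \<in> S" and Z: "Z \<in> carrier (R Quot p_of R S)"
    and zero: "canon R (p_of R S) s \<otimes>\<^bsub>R Quot p_of R S\<^esub> Z = \<zero>\<^bsub>R Quot p_of R S\<^esub>"
  shows "Z = \<zero>\<^bsub>R Quot p_of R S\<^esub>"
proof -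
  obtain r where r: "r \<in> carrier R" "Z = canon R (p_of R S) r" using canon_surj[OF Z] by blast
  then have "canon R (p_of R S) (s \<otimes> r) = \<zero>\<^bsub>R Quot p_of R S\<^esub>"
    using zero canon_mult[of s r] s by simp
  then have "s \<otimes> r \<in> p_of R S" using canon_eq_zero_iff[of "s \<otimes> r"] s r(1) by simp
  then show ?thesis using p_of_cancel_left[OF s r(1)] canon_eq_zero_iff r by simp
qed

lemma canon_S_regular_right:
  assumes s: "s \<in> S" and Z: "Z \<in> carrier (R Quot p_of R S)"
    and zero: "Z \<otimes>\<^bsub>R Quot p_of R S\<^esub> canon R (p_of R S) s = \<zero>\<^bsub>R Quot p_of R S\<^esub>"
  shows "Z = \<zero>\<^bsub>R Quot p_of R S\<^esub>"
proof -
  obtain r where r: "r \<in> carrier R" "Z = canon R (p_of R S) r" using canon_surj[OF Z] by blast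
  then have "canon R (p_of R S) (r \<otimes> s) = \<zero>\<^bsub>R Quot p_of R S\<^esub>"
    using zero canon_mult[of r s] s by simp
  then have "r \<otimes> s \<in> p_of R S" using canon_eq_zero_iff[of "r \<otimes> s"] s r(1) by simp
  then show ?thesis using p_of_cancel_right[OF s r(1)] canon_eq_zero_iff r by simp
qed

lemma left_ore_quotient:
  assumes Z: "Z \<in> carrier (R Quot p_of R S)" and s: "s \<in> canon R (p_of R S) ` S"
  shows "\<exists>s'\<in>canon R (p_of R S) ` S. \<exists>r'\<in>carrier (R Quot p_of R S).
    s' \<otimes>\<^bsub>R Quot p_of R S\<^esub> Z = r' \<otimes>\<^bsub>R Quot p_of R S\<^esub> s"
proof -
  obtain x s0 where x: "x \<in> carrier R" "Z = canon R (p_of R S) x"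
    and s0: "s0 \<in> S" "s = canon R (p_of R S) s0"
    using canon_surj[OF Z] s by blast
  obtain s' r' where l: "s' \<in> S" "r' \<in> carrier R" "s' \<otimes> x = r' \<otimes> s0"
    using left_ore[OF x(1) s0(1)] by blast
  have "canon R (p_of R S) s' \<otimes>\<^bsub>R Quot p_of R S\<^esub> Z = canon R (p_of R S) r' \<otimes>\<^bsub>R Quot p_of R S\<^esub> s"
    using x s0 l canon_mult[of s' x] canon_mult[of r' s0] by simp
  then show ?thesis using l(1,2) canon_closed by blast
qed

lemma right_ore_quotient:
  assumes Z: "Z \<in> carrier (R Quot p_of R S)" and s: "s \<in> canon R (p_of R S) ` S"
  shows "\<exists>s'\<in>canon R (p_of R S) ` S. \<exists>r'\<in>carrier (R Quot p_of R S).
    Z \<otimes>\<^bsub>R Quot p_of R S\<^esub> s' = s \<otimes>\<^bsub>R Quot p_of R S\<^esub> r'"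
proof -
  obtain x s0 where x: "x \<in> carrier R" "Z = canon R (p_of R S) x"
    and s0: "s0 \<in> S" "s = canon R (p_of R S) s0"
    using canon_surj[OF Z] s by blast
  obtain s' r' where r: "s' \<in> S" "r' \<in> carrier R" "x \<otimes> s' = s0 \<otimes> r'"
    using right_ore[OF x(1) s0(1)] by blast
  have "Z \<otimes>\<^bsub>R Quot p_of R S\<^esub> canon R (p_of R S) s' = s \<otimes>\<^bsub>R Quot p_of R S\<^esub> canon R (p_of R S) r'"
    using x s0 r canon_mult[of x s'] canon_mult[of s0 r'] by simp
  then show ?thesis using r(1,2) canon_closed by blast
qed

lemma ore_set_quotient: "ore_set (R Quot p_of R S) (canon R (p_of R S) ` S)"
  unfolding ore_set_def
proof (intro conjI ballI left_ore_quotient right_ore_quotient)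
  show "canon R (p_of R S) ` S \<subseteq> carrier (R Quot p_of R S)" using canon_closed by auto
  show "\<one>\<^bsub>R Quot p_of R S\<^esub> \<in> canon R (p_of R S) ` S"
    using one_S ring_hom_one[OF canon_hom] by force
  show "\<zero>\<^bsub>R Quot p_of R S\<^esub> \<notin> canon R (p_of R S) ` S"
  proof
    assume "\<zero>\<^bsub>R Quot p_of R S\<^esub> \<in> canon R (p_of R S) ` S"
    then obtain s where "s \<in> S" "canon R (p_of R S) s = \<zero>\<^bsub>R Quot p_of R S\<^esub>" by force
    then show False using canon_eq_zero_iff p_of_disjoint by auto
  qed
  show "s \<otimes>\<^bsub>R Quot p_of R S\<^esub> t \<in> canon R (p_of R S) ` S"
    if st_mem: "s \<in> canon R (p_of R S) ` S" "t \<in> canon R (p_of R S) ` S" for s t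
  proof -
    obtain s0 t0 where st: "s0 \<in> S" "t0 \<in> S" "s = canon R (p_of R S) s0" "t = canon R (p_of R S) t0"
      using st_mem by blast
    then have "s \<otimes>\<^bsub>R Quot p_of R S\<^esub> t = canon R (p_of R S) (s0 \<otimes> t0)" using canon_mult by simp
    then show ?thesis using mult_S[OF st(1,2)] by simp
  qed
qed

lemma regular_left_ore_quotient: "regular_left_ore (R Quot p_of R S) (canon R (p_of R S) ` S)"
proof (intro regular_left_ore.intro[OF ring_quotient] regular_left_ore_axioms.intro)
  show "canon R (p_of R S) ` S \<subseteq> carrier (R Quot p_of R S)"
    and "\<one>\<^bsub>R Quot p_of R S\<^esub> \<in> canon R (p_of R S) ` S"
    and "\<And>s t. s \<in> canon R (p_of R S) ` S \<Longrightarrow> t \<in> canon R (p_of R S) ` S \<Longrightarrow>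
      s \<otimes>\<^bsub>R Quot p_of R S\<^esub> t \<in> canon R (p_of R S) ` S"
    and "\<And>r s. r \<in> carrier (R Quot p_of R S) \<Longrightarrow> s \<in> canon R (p_of R S) ` S \<Longrightarrow>
      \<exists>s'\<in>canon R (p_of R S) ` S. \<exists>r'\<in>carrier (R Quot p_of R S).
        s' \<otimes>\<^bsub>R Quot p_of R S\<^esub> r = r' \<otimes>\<^bsub>R Quot p_of R S\<^esub> s"
    using ore_set_quotient unfolding ore_set_def by blast+
qed (use canon_S_regular_left canon_S_regular_right in blast)+

sublocale quotient: regular_left_ore "R Quot p_of R S" "canon R (p_of R S) ` S"
  by (rule regular_left_ore_quotient)

lemma denominator_set_quotient: "denominator_set (R Quot p_of R S) (canon R (p_of R S) ` S)"
  unfolding denominator_set_def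
  using ore_set_quotient quotient.denominator_regular_left quotient.denominator_regular_right
    quotient.one_denominator quotient.r_null quotient.l_null
  by (metis quotient.one_closed)

lemma regular_elem_canon:
  assumes s: "s \<in> S" shows "regular_elem (R Quot p_of R S) (canon R (p_of R S) s)"
  unfolding regular_elem_def
  using canon_closed[OF S_carrier[OF s]] canon_S_regular_left[OF s] canon_S_regular_right[OF s] by blast

lemma inverts_factors_through_quotient:
  fixes Q' :: "('c, 'n) ring_scheme"
  assumes inverts: "inverts R S Q' f"
  obtains g where "g \<in> ring_hom (R Quot p_of R S) Q'"
    and "\<And>x. x \<in> carrier R \<Longrightarrow> g (canon R (p_of R S) x) = f x"
proof -
  have Q': "ring Q'" and f: "f \<in> ring_hom R Q'" using inverts unfolding inverts_def by blast+
  show thesis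
    using that ideal.quotient_lift[OF ideal_p_of Q' f p_of_kernel[OF inverts]] unfolding canon_def
    by blast
qed

lemma inverts_frac_ring:
  "inverts R S quotient.frac_ring (\<lambda>r. quotient.frac_embed (canon R (p_of R S) r))"
  unfolding inverts_def
proof (intro conjI ballI quotient.ring_frac_ring)
  show "(\<lambda>r. quotient.frac_embed (canon R (p_of R S) r)) \<in> ring_hom R quotient.frac_ring"
    using ring_hom_trans[OF canon_hom quotient.frac_embed_hom] by (simp add: comp_def)
  show "quotient.frac_embed (canon R (p_of R S) s) \<in> Units quotient.frac_ring" if "s \<in> S" for s
    using quotient.frac_embed_Units that by blast
qed

lemma universal_for_frac_ring:
  "universal_for R S quotient.frac_ring (\<lambda>r. quotient.frac_embed (canon R (p_of R S) r)) TYPE('t)"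
  unfolding universal_for_def
proof (intro conjI allI impI inverts_frac_ring)
  fix Q' :: "'t ring" and f
  assume inverts: "inverts R S Q' f"
  obtain g where g: "g \<in> ring_hom (R Quot p_of R S) Q'"
    and gf: "\<And>x. x \<in> carrier R \<Longrightarrow> g (canon R (p_of R S) x) = f x"
    using inverts_factors_through_quotient[OF inverts] by blast
  interpret lift: regular_left_ore_lift "R Quot p_of R S" "canon R (p_of R S) ` S" Q' g
  proof (intro regular_left_ore_lift.intro regular_left_ore_lift_axioms.intro regular_left_ore_quotient g)
    show "ring Q'" using inverts unfolding inverts_def by blast
    show "g t \<in> Units Q'" if "t \<in> canon R (p_of R S) ` S" for t
      using that gf inverts unfolding inverts_def by auto
  qed
  show "\<exists>h. h \<in> ring_hom quotient.frac_ring Q' \<and>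
      (\<forall>r\<in>carrier R. f r = h (quotient.frac_embed (canon R (p_of R S) r))) \<and>
      (\<forall>h'. h' \<in> ring_hom quotient.frac_ring Q' \<and>
         (\<forall>r\<in>carrier R. f r = h' (quotient.frac_embed (canon R (p_of R S) r))) \<longrightarrow>
         (\<forall>q\<in>carrier quotient.frac_ring. h' q = h q))"
  proof (intro exI conjI ballI allI impI)
    show "lift.frac_lift \<in> ring_hom quotient.frac_ring Q'" by (rule lift.frac_lift_hom)
    show "f r = lift.frac_lift (quotient.frac_embed (canon R (p_of R S) r))" if "r \<in> carrier R" for r
      using lift.frac_lift_frac_embed[OF canon_closed[OF that]] gf[OF that] by simp
    fix h' q
    assume h': "h' \<in> ring_hom quotient.frac_ring Q' \<and>
      (\<forall>r\<in>carrier R. f r = h' (quotient.frac_embed (canon R (p_of R S) r)))"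
      and q: "q \<in> carrier quotient.frac_ring"
    have "h' (quotient.frac_embed b) = g b" if "b \<in> carrier (R Quot p_of R S)" for b
      using canon_surj[OF that] h' gf by auto
    then show "h' q = lift.frac_lift q" using lift.frac_lift_unique h' q by simp
  qed
qed

end

lemma universal_for_hom_unique:
  fixes Q' :: "'t ring"
  assumes "universal_for R S Q f TYPE('t)" and "inverts R S Q' f'"
    and "h1 \<in> ring_hom Q Q'" "\<forall>r\<in>carrier R. f' r = h1 (f r)"
    and "h2 \<in> ring_hom Q Q'" "\<forall>r\<in>carrier R. f' r = h2 (f r)"
    and "q \<in> carrier Q"
  shows "h1 q = h2 q"
proof -
  obtain h where "\<forall>h'. h' \<in> ring_hom Q Q' \<and> (\<forall>r\<in>carrier R. f' r = h' (f r)) \<longrightarrow>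
      (\<forall>q\<in>carrier Q. h' q = h q)"
    using assms(1,2) unfolding universal_for_def by blast
  then show ?thesis using assms(3-7) by metis
qed

lemma universal_for_iso:
  fixes Q :: "'q ring" and Q' :: "'c ring"
  assumes U: "universal_for R S Q f TYPE('c)" "universal_for R S Q f TYPE('q)"
    and U': "universal_for R S Q' f' TYPE('c)" "universal_for R S Q' f' TYPE('q)"
  shows "\<exists>h. h \<in> ring_iso Q Q' \<and> (\<forall>r\<in>carrier R. f' r = h (f r))"
proof -
  have inv: "inverts R S Q f" and inv': "inverts R S Q' f'"
    using U(1) U'(1) unfolding universal_for_def by blast+
  obtain h where h: "h \<in> ring_hom Q Q'" "\<forall>r\<in>carrier R. f' r = h (f r)"
    using U(1) inv' unfolding universal_for_def by blast
  obtain k where k: "k \<in> ring_hom Q' Q" "\<forall>r\<in>carrier R. f r = k (f' r)"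
    using U'(2) inv unfolding universal_for_def by blast
  have id_hom: "id \<in> ring_hom A A" for A :: "('x, 'y) ring_scheme"
    by (rule ring_hom_memI) auto
  have "(k \<circ> h) q = id q" if "q \<in> carrier Q" for q
    by (rule universal_for_hom_unique[OF U(2) inv ring_hom_trans[OF h(1) k(1)] _ id_hom _ that])
      (use h(2) k(2) in auto)
  moreover have "(h \<circ> k) q = id q" if "q \<in> carrier Q'" for q
    by (rule universal_for_hom_unique[OF U'(1) inv' ring_hom_trans[OF k(1) h(1)] _ id_hom _ that])
      (use h(2) k(2) in auto)
  ultimately have "bij_betw h (carrier Q) (carrier Q')"
    using ring_hom_closed[OF h(1)] ring_hom_closed[OF k(1)]
    by (intro bij_betw_byWitness[where f' = k]) auto
  then show ?thesis using h unfolding ring_iso_def by blast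
qed

theorem corollary4p16:
  fixes R :: "('a, 'm) ring_scheme" and S :: "'a set"
  assumes "ring R" and "ore_set R S"
  shows "\<exists>(Q :: ('a set \<times> 'a set) set ring) f.
           universal_for R S Q f TYPE('c) \<and>
           universal_for R S Q f TYPE(('a set \<times> 'a set) set) \<and>
           (\<forall>(Q' :: 'c ring) f'.
              universal_for R S Q' f' TYPE('c) \<and>
              universal_for R S Q' f' TYPE(('a set \<times> 'a set) set) \<longrightarrow>
              (\<exists>h. h \<in> ring_iso Q Q' \<and> (\<forall>r\<in>carrier R. f' r = h (f r)))) \<and>
           (\<exists>\<phi>. left_localization (R Quot p_of R S) (canon R (p_of R S) ` S) Q \<phi> \<and>
                 (\<forall>r\<in>carrier R. f r = \<phi> (canon R (p_of R S) r)))
         \<and> ideal (p_of R S) R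
         \<and> denominator_set (R Quot p_of R S) (canon R (p_of R S) ` S)
         \<and> (\<forall>s\<in>S. regular_elem (R Quot p_of R S) (canon R (p_of R S) s))"
proof -
  interpret ore_ring R S by (intro ore_ring.intro ore_ring_axioms.intro assms)
  let ?Q = "quotient.frac_ring" and ?f = "\<lambda>r. quotient.frac_embed (canon R (p_of R S) r)"
  have "universal_for R S ?Q ?f TYPE('c)" "universal_for R S ?Q ?f TYPE(('a set \<times> 'a set) set)"
    by (rule universal_for_frac_ring)+
  moreover have "\<exists>\<phi>. left_localization (R Quot p_of R S) (canon R (p_of R S) ` S) ?Q \<phi> \<and>
      (\<forall>r\<in>carrier R. ?f r = \<phi> (canon R (p_of R S) r))"
    using quotient.left_localization_frac_ring by blast
  ultimately show ?thesis
    using universal_for_iso ideal_p_of denominator_set_quotient regular_elem_canon by blast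
qed

end
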